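(* Let $F$ be a continuous distribution function with a density that is symmetric about $\theta$ and unimodal. Fix $0 < \alpha < 1$ and $0 \le \varepsilon < 1/2$, and for each $n$ let $k_n = \arg\min_k |\alpha^*(n,k,\varepsilon) - \alpha|$. Consider the sequence of intervals $I_n = [x_{(k_n+1)}, x_{(n-k_n)}]$ built from samples $X_n = (x_1,\dots,x_n)$. Then: 1. For $0 \le \delta < (1-\varepsilon)/2$, $$L\{I_n,F,\delta\} = F^{-1}\Big\{\frac{1+\varepsilon}{2(1-\delta)}\Big\} - F^{-1}\Big\{\frac{1-\varepsilon}{2(1-\delta)}\Big\}.$$ 2. The length breakdown point is $\delta^*\{I_n,F\} = (1-\varepsilon)/2$. 3. The sequence $I_n$ has $\varepsilon$-robust length at $F$ if and only if $\varepsilon < 1/3$. 4. Let $[A_n(X_n), B_n(X_n)]$, $n \ge 1$, be any sequence of confidence intervals such that for every $n$ and every distribution $G_0$ satisfying (A1), $$\inf_{G \in \mathcal{F}_\varepsilon(G_0)} P_G\{A_n(X_n) \le G_0^{-1}(1/2) < B_n(X_n)\} = 1 - \alpha,$$ where $X_n$ is an i.i.d. sample of size $n$ from $G$. Suppose that, when the sample comes from $F$, $A_n(X_n) \to A_0$ and $B_n(X_n) \to B_0$ almost surely for constants $A_0, B_0$. Then $B_0 \ge F^{-1}((1+\varepsilon)/2)$ and $A_0 \le F^{-1}((1-\varepsilon)/2)$.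
   Context: Assumption (A1): a distribution function is continuous with a unique median. For a distribution function $F$, $F^{-1}(p) = \inf\{x : F(x) \ge p\}$. For $0 \le \varepsilon < 1/2$, the contamination neighborhood is $\mathcal{F}_\varepsilon(F) = \{G : G = (1-\varepsilon)F + \varepsilon H,\ H \text{ an arbitrary distribution on } \mathbb{R}\}$. For integers $n \ge 1$, $k \ge 0$, $\alpha^*(n,k,\varepsilon) = 1 - P(k < Z_n < n-k)$ with $Z_n \sim \mathrm{Binomial}(n,(1-\varepsilon)/2)$. For a sequence of intervals $I_n = [a_n(X_n), b_n(X_n)]$ and $\delta \in [0,1/2)$, the maximum asymptotic length under contamination of size $\delta$ at $F$ is $$L\{I_n,F,\delta\} = \sup_{G \in \mathcal{F}_\delta(F)} \operatorname{ess\,sup} \limsup_{n\to\infty} \big(b_n(X_n) - a_n(X_n)\big),$$ where under $G$ the $X_n = (x_1,\dots,x_n)$ are the first $n$ elements of an i.i.d. sequence with distribution $G$ and the essential supremum is with respect to that law. The sequence $I_n$ has $\delta$-robust length at $F$ if $L\{I_n,F,\delta\} < \infty$, and its length breakdown point at $F$ is $\delta^*\{I_n,F\} = \sup\{\delta : L\{I_n,F,\delta\} < \infty\}$. *)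

theory Defs
  imports "HOL-Probability.Probability"
begin

definition quantile :: "(real \<Rightarrow> real) \<Rightarrow> real \<Rightarrow> real" where
  "quantile F p = Inf {x. F x \<ge> p}"

definition A1 :: "real measure \<Rightarrow> bool" where
  "A1 G \<longleftrightarrow> real_distribution G \<and> (\<forall>x. isCont (cdf G) x) \<and> (\<exists>!m. cdf G m = 1/2)"

definition contam :: "real measure \<Rightarrow> real \<Rightarrow> real measure set" where
  "contam F eps = {G. real_distribution G \<and>
      (\<exists>H. real_distribution H \<and> (\<forall>x. cdf G x = (1 - eps) * cdf F x + eps * cdf H x))}"

definition iid :: "real measure \<Rightarrow> (nat \<Rightarrow> real) measure" where
  "iid G = (\<Pi>\<^sub>M i\<in>(UNIV::nat set). G)"

definition sample :: "(nat \<Rightarrow> real) \<Rightarrow> nat \<Rightarrow> real list" where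
  "sample \<omega> n = map \<omega> [0..<n]"

text \<open>j-th order statistic (1-indexed) x_(j) of a sample.\<close>
definition ostat :: "real list \<Rightarrow> nat \<Rightarrow> real" where
  "ostat xs j = sort xs ! (j - 1)"

definition alpha_star :: "nat \<Rightarrow> nat \<Rightarrow> real \<Rightarrow> real" where
  "alpha_star n k eps =
     1 - measure_pmf.prob (binomial_pmf n ((1 - eps)/2)) {z. k < z \<and> z < n - k}"

definition max_asym_length ::
  "(nat \<Rightarrow> real list \<Rightarrow> real) \<Rightarrow> (nat \<Rightarrow> real list \<Rightarrow> real) \<Rightarrow> real measure \<Rightarrow> real \<Rightarrow> ereal" where
  "max_asym_length a b F \<delta> =
     (SUP G\<in>contam F \<delta>. esssup (iid G)
         (\<lambda>\<omega>. limsup (\<lambda>n. ereal (b n (sample \<omega> n) - a n (sample \<omega> n)))))"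

definition robust_length ::
  "(nat \<Rightarrow> real list \<Rightarrow> real) \<Rightarrow> (nat \<Rightarrow> real list \<Rightarrow> real) \<Rightarrow> real measure \<Rightarrow> real \<Rightarrow> bool" where
  "robust_length a b F \<delta> \<longleftrightarrow> max_asym_length a b F \<delta> < \<infinity>"

definition length_breakdown ::
  "(nat \<Rightarrow> real list \<Rightarrow> real) \<Rightarrow> (nat \<Rightarrow> real list \<Rightarrow> real) \<Rightarrow> real measure \<Rightarrow> real" where
  "length_breakdown a b F = Sup {\<delta>. 0 \<le> \<delta> \<and> \<delta> < 1/2 \<and> robust_length a b F \<delta>}"

end

(*
  The binomial weights become uniformly small, so alpha_star n (k n) \<epsilon> \<rightarrow> \<alpha>; the binomial
  law of large numbers then forces k n / n \<rightarrow> p = (1 - \<epsilon>) / 2, and by the strong law of large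
  numbers the order statistics x_(k n + 1) and x_(n - k n) of a sample from G end up near the
  points where cdf G crosses p and 1 - p.

  For G = (1 - \<delta>) F + \<delta> H these points enclose an interval of F-mass at most \<epsilon> / (1 - \<delta>)
  inside a band symmetric about \<theta>. The F-mass of a window of fixed length is quasi-concave in
  its position, so no such interval is longer than
  [Q ((1 - \<epsilon>) / (2 (1 - \<delta>))), Q ((1 + \<epsilon>) / (2 (1 - \<delta>)))],
  and a contaminating atom to the right attains this length. For \<delta> \<ge> p a far-away atom
  captures more than k n observations infinitely often with positive probability, so the
  length is unbounded.

  Finally, F itself is an \<epsilon>-contamination of distributions with medians Q ((1 - \<epsilon>) / 2) and
  Q ((1 + \<epsilon>) / 2); coverage 1 - \<alpha> > 0 under F forces the almost sure limits of the endpoints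
  to lie on the correct sides of these medians.
*)
theory Submission
  imports Defs
begin

section \<open>Order statistics\<close>

lemma sorted_nth_le_iff_length_filter:
  fixes s :: "'a::linorder list"
  assumes "sorted s" "i < length s"
  shows "s ! i \<le> t \<longleftrightarrow> i < length (filter (\<lambda>x. x \<le> t) s)"
  using assms
proof (induction s arbitrary: i)
  case (Cons x s)
  show ?case
  proof (cases "x \<le> t")
    case True
    with Cons show ?thesis by (cases i) auto
  next
    case False
    with Cons.prems have "filter (\<lambda>x. x \<le> t) s = []" and "x \<le> (x # s) ! i"
      by (auto simp: filter_empty_conv nth_Cons split: nat.split)
    with False show ?thesis by auto
  qed
qed simp

lemma ostat_le_iff_length_filter:
  assumes "1 \<le> j" "j \<le> length xs"
  shows "ostat xs j \<le> t \<longleftrightarrow> j \<le> length (filter (\<lambda>x. x \<le> t) xs)"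
proof -
  have "ostat xs j \<le> t \<longleftrightarrow> j - 1 < length (filter (\<lambda>x. x \<le> t) (sort xs))"
    unfolding ostat_def using assms by (intro sorted_nth_le_iff_length_filter) auto
  also have "length (filter (\<lambda>x. x \<le> t) (sort xs)) = length (filter (\<lambda>x. x \<le> t) xs)"
    by (metis filter_sort length_sort)
  finally show ?thesis using assms by auto
qed

lemma ostat_sample_le_iff:
  assumes "1 \<le> j" "j \<le> n"
  shows "ostat (sample \<omega> n) j \<le> t \<longleftrightarrow> j \<le> card {i\<in>{..<n}. \<omega> i \<le> t}"
proof -
  have "length (filter (\<lambda>x. x \<le> t) (sample \<omega> n)) = card {i\<in>{..<n}. \<omega> i \<le> t}"
    unfolding sample_def length_filter_conv_card by (auto intro!: arg_cong[where f=card])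
  with assms show ?thesis by (simp add: ostat_le_iff_length_filter sample_def)
qed

lemma ostat_sample_gt_if_card_gt:
  assumes "1 \<le> j" "j \<le> n" "n - j < card {i\<in>{..<n}. t < \<omega> i}"
  shows "t < ostat (sample \<omega> n) j"
proof -
  have "card {..<n} = card ({i\<in>{..<n}. \<omega> i \<le> t} \<union> {i\<in>{..<n}. t < \<omega> i})"
    by (rule arg_cong[where f=card]) auto
  also have "\<dots> = card {i\<in>{..<n}. \<omega> i \<le> t} + card {i\<in>{..<n}. t < \<omega> i}"
    by (rule card_Un_disjoint) auto
  finally have "card {i\<in>{..<n}. \<omega> i \<le> t} + card {i\<in>{..<n}. t < \<omega> i} = n" by simp
  with assms have "card {i\<in>{..<n}. \<omega> i \<le> t} < j" by linarith
  then show ?thesis using ostat_sample_le_iff[OF assms(1,2), of \<omega> t] by simp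
qed

lemma count_measurable:
  fixes n :: nat
  assumes [measurable]: "A \<in> sets M" and "{..<n} \<subseteq> I"
  shows "(\<lambda>\<omega>. real (card {i\<in>{..<n}. \<omega> i \<in> A})) \<in> borel_measurable (\<Pi>\<^sub>M i\<in>I. M)"
proof -
  have eq: "(\<lambda>\<omega>. real (card {i\<in>{..<n}. \<omega> i \<in> A})) = (\<lambda>\<omega>. \<Sum>i<n. indicator A (\<omega> i))"
    by (intro ext) (simp add: indicator_def Int_def)
  have "(\<lambda>\<omega>. indicator A (\<omega> i) :: real) \<in> borel_measurable (\<Pi>\<^sub>M i\<in>I. M)" if "i < n" for i
    using assms(2) that by (intro measurable_compose[OF measurable_component_singleton]) auto
  then show ?thesis unfolding eq by (intro borel_measurable_sum) auto
qed

lemma count_set_measurable: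
  fixes n :: nat
  assumes "A \<in> sets M" "{..<n} \<subseteq> I"
  shows "{\<omega> \<in> space (\<Pi>\<^sub>M i\<in>I. M). P (card {i\<in>{..<n}. \<omega> i \<in> A})} \<in> sets (\<Pi>\<^sub>M i\<in>I. M)"
proof -
  have "real ` {z. P z} \<in> sets borel" by (rule sets.countable) auto
  then have "(\<lambda>\<omega>. real (card {i\<in>{..<n}. \<omega> i \<in> A})) -` (real ` {z. P z}) \<inter> space (\<Pi>\<^sub>M i\<in>I. M)
      \<in> sets (\<Pi>\<^sub>M i\<in>I. M)"
    by (rule measurable_sets[OF count_measurable[OF assms]])
  also have "(\<lambda>\<omega>. real (card {i\<in>{..<n}. \<omega> i \<in> A})) -` (real ` {z. P z}) \<inter> space (\<Pi>\<^sub>M i\<in>I. M)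
      = {\<omega> \<in> space (\<Pi>\<^sub>M i\<in>I. M). P (card {i\<in>{..<n}. \<omega> i \<in> A})}"
    by auto
  finally show ?thesis .
qed

lemma ostat_sample_measurable [measurable]:
  "(\<lambda>\<omega>. ostat (sample \<omega> n) j) \<in> borel_measurable (\<Pi>\<^sub>M i\<in>UNIV. borel)"
proof (cases "j - 1 < n")
  case False
  text \<open>Beyond the sample size the order statistic is a junk value, but a constant one.\<close>
  have "ostat (sample \<omega> n) j = [] ! (j - 1 - n)" for \<omega>
  proof -
    have "sort (sample \<omega> n) ! (j - 1) = (sort (sample \<omega> n) @ []) ! (j - 1)" by simp
    also have "\<dots> = [] ! (j - 1 - n)" using False by (subst nth_append) (simp add: sample_def)
    finally show ?thesis by (simp add: ostat_def)
  qed
  then show ?thesis by simp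
next
  case True
  text \<open>Index 0 behaves like index 1, because j - 1 is truncated.\<close>
  define j' where "j' = Suc (j - 1)"
  have "ostat (sample \<omega> n) j = ostat (sample \<omega> n) j'" for \<omega>
    by (cases j) (auto simp: ostat_def j'_def)
  moreover have "{\<omega> \<in> space (\<Pi>\<^sub>M i\<in>UNIV. borel). ostat (sample \<omega> n) j' \<le> t}
      = {\<omega> \<in> space (\<Pi>\<^sub>M i\<in>UNIV. borel). j' \<le> card {i\<in>{..<n}. \<omega> i \<in> {..t}}}" for t
    using True by (auto simp: ostat_sample_le_iff j'_def)
  moreover have "{\<omega> \<in> space (\<Pi>\<^sub>M i\<in>UNIV. borel). j' \<le> card {i\<in>{..<n}. \<omega> i \<in> {..t}}}
      \<in> sets (\<Pi>\<^sub>M i\<in>UNIV. borel)" for t :: real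
    by (rule count_set_measurable) auto
  ultimately show ?thesis by (simp add: borel_measurable_iff_le)
qed

section \<open>Binomial weights and the choice of k\<close>

lemma binomial_pmf_Suc_ratio:
  fixes p :: real
  assumes p: "0 < p" "p < 1" and l: "l < n"
  shows "pmf (binomial_pmf n p) (Suc l) * (real (Suc l) * (1 - p))
       = pmf (binomial_pmf n p) l * (real (n - l) * p)"
proof -
  have "(n choose Suc l) * Suc l = (n - l) * (n choose l)"
    by (cases n) (simp_all only: binomial_absorb_comp Suc_times_binomial_eq[symmetric], simp_all)
  then have choose: "real (n choose Suc l) * real (Suc l) = real (n - l) * real (n choose l)"
    by (metis of_nat_mult)
  have pow: "(1 - p) ^ (n - l) = (1 - p) ^ (n - Suc l) * (1 - p)"
    using l by (simp add: Suc_diff_Suc flip: power_Suc2)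
  have "pmf (binomial_pmf n p) (Suc l) * (real (Suc l) * (1 - p))
      = (real (n choose Suc l) * real (Suc l)) * (p ^ l * p) * ((1 - p) ^ (n - Suc l) * (1 - p))"
    using p by (simp add: algebra_simps)
  also have "\<dots> = pmf (binomial_pmf n p) l * (real (n - l) * p)"
    using p by (simp only: choose flip: pow) (simp add: algebra_simps)
  finally show ?thesis .
qed

lemma mult_le_one_if_pmf_ge:
  assumes "\<And>i. i < L \<Longrightarrow> c \<le> pmf M (j + i)"
  shows "real L * c \<le> 1"
proof -
  have "real L * c \<le> (\<Sum>i<L. pmf M (j + i))"
    using sum_mono[of "{..<L}" "\<lambda>_. c"] assms by simp
  also have "\<dots> = measure_pmf.prob M ((+) j ` {..<L})"
    by (simp add: measure_measure_pmf_finite sum.reindex)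
  also have "\<dots> \<le> 1" by simp
  finally show ?thesis .
qed

lemma binomial_pmf_Suc_ge:
  fixes p m :: real
  assumes p: "0 < p" "p < 1" and l: "real l + 1 \<le> m" and m: "m + 1 \<le> real n"
  shows "(real n - m) * p / ((m + 1) * (1 - p)) * pmf (binomial_pmf n p) l
       \<le> pmf (binomial_pmf n p) (Suc l)"
proof -
  define \<rho> where "\<rho> = (real n - m) * p / ((m + 1) * (1 - p))"
  let ?P = "pmf (binomial_pmf n p)"
  have "0 < m + 1" "0 \<le> real n - m" using l m by linarith+
  then have "0 \<le> \<rho>" using p by (simp add: \<rho>_def)
  then have "\<rho> * (real (Suc l) * (1 - p)) \<le> \<rho> * ((m + 1) * (1 - p))"
    using l p by (intro mult_left_mono mult_right_mono) auto
  also have "\<dots> = (real n - m) * p"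
    using \<open>0 < m + 1\<close> p by (simp add: \<rho>_def)
  also have "\<dots> \<le> real (n - l) * p"
    using l m p by (intro mult_right_mono) (auto simp: of_nat_diff)
  finally have "?P l * (\<rho> * (real (Suc l) * (1 - p))) \<le> ?P l * (real (n - l) * p)"
    by (simp add: mult_left_mono)
  then have "\<rho> * ?P l * (real (Suc l) * (1 - p)) \<le> ?P l * (real (n - l) * p)"
    by (simp only: ac_simps)
  also have "\<dots> = ?P (Suc l) * (real (Suc l) * (1 - p))"
    using l m binomial_pmf_Suc_ratio[OF p, of l n] by simp
  finally have "\<rho> * ?P l * (real (Suc l) * (1 - p)) \<le> ?P (Suc l) * (real (Suc l) * (1 - p))" .
  then have "\<rho> * ?P l \<le> ?P (Suc l)"
    by (rule mult_right_le_imp_le) (use p in simp)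
  then show ?thesis by (simp only: \<rho>_def)
qed

text \<open>Near the mean the successive ratios of the binomial weights are close to 1, so the
  L weights following pmf j are all at least pmf j / 2; as they sum to at most 1, pmf j \<le> 2 / L.\<close>
lemma binomial_pmf_le_two_div:
  fixes p :: real and L n j :: nat
  assumes p: "0 < p" "p < 1" and L: "1 \<le> L"
    and n_large: "2 * real L * (real L + 1) \<le> real n * p * (1 - p)"
    and j: "real j \<le> real n * p"
  shows "pmf (binomial_pmf n p) j \<le> 2 / real L"
proof -
  define q where "q = 1 - p"
  define m where "m = real n * p + real L"
  define \<rho> where "\<rho> = (real n - m) * p / ((m + 1) * q)"
  let ?P = "pmf (binomial_pmf n p)"
  have q: "0 < q" "q < 1" using p by (auto simp: q_def)
  have LL: "real L + 1 \<le> 2 * real L * (real L + 1)" "0 < 2 * real L * (real L + 1)"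
    using L mult_right_mono[of 1 "2 * real L" "real L + 1"] by simp_all
  have npq: "2 * real L * (real L + 1) \<le> real n * p * q" "0 < real n * p * q"
    using n_large LL(2) by (simp_all add: q_def)
  have "real n * p * q \<le> real n * q"
    using p q by (simp add: mult_left_le mult_right_mono)
  then have m_le: "m + 1 \<le> real n"
    using npq LL by (simp add: m_def q_def algebra_simps)
  have "0 \<le> real n * p" using p by simp
  then have m_pos: "0 < m + 1" by (simp add: m_def)
  have "1 - \<rho> = ((m + 1) * q - (real n - m) * p) / ((m + 1) * q)"
    using m_pos q by (simp add: \<rho>_def diff_divide_distrib)
  also have "(m + 1) * q - (real n - m) * p = real L + q"
    by (simp add: m_def q_def algebra_simps)
  finally have one_minus_\<rho>: "1 - \<rho> = (real L + q) / ((m + 1) * q)" .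
  have "0 \<le> 1 - \<rho>" unfolding one_minus_\<rho> using m_pos q by simp
  then have \<rho>: "0 \<le> \<rho>" "\<rho> \<le> 1"
    using m_le m_pos p q by (simp_all add: \<rho>_def)
  have ratio: "\<rho> * ?P l \<le> ?P (Suc l)" if "real l + 1 \<le> m" for l
    using binomial_pmf_Suc_ge[OF p that m_le] by (simp add: \<rho>_def q_def)
  have growth: "\<rho> ^ i * ?P j \<le> ?P (j + i)" if "i \<le> L" for i
    using that
  proof (induction i)
    case (Suc i)
    then have "\<rho> ^ Suc i * ?P j \<le> \<rho> * ?P (j + i)" using \<rho> by (simp add: mult_left_mono mult.assoc)
    also have "\<dots> \<le> ?P (Suc (j + i))" using Suc.prems j by (intro ratio) (simp add: m_def)
    finally show ?case by simp
  qed simp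
  have "real L * (1 - \<rho>) \<le> real L * (real L + 1) / (real n * p * q)"
    unfolding one_minus_\<rho> times_divide_eq_right
  proof (rule frac_le)
    show "real L * (real L + q) \<le> real L * (real L + 1)" using q by (simp add: mult_left_mono)
    show "real n * p * q \<le> (m + 1) * q" using q by (simp add: m_def mult_right_mono)
  qed (use npq in simp_all)
  also have "\<dots> \<le> 1 / 2" using npq by (simp add: field_simps)
  finally have half: "1 / 2 \<le> \<rho> ^ L"
    using Bernoulli_inequality[of "\<rho> - 1" L] \<rho> by (simp add: algebra_simps)
  have "?P j / 2 \<le> ?P (j + i)" if "i < L" for i
  proof -
    have "1 / 2 \<le> \<rho> ^ i" using half power_decreasing[of i L \<rho>] \<rho> that by simp
    then have "?P j / 2 \<le> \<rho> ^ i * ?P j"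
      using mult_right_mono[of "1 / 2" "\<rho> ^ i" "?P j"] by simp
    with growth[of i] that show ?thesis by simp
  qed
  then have "real L * (?P j / 2) \<le> 1" by (rule mult_le_one_if_pmf_ge)
  then show ?thesis using L by (simp add: field_simps)
qed

lemma binomial_pmf_eventually_le:
  fixes p \<eta> :: real
  assumes p: "0 < p" "p < 1" and \<eta>: "0 < \<eta>"
  shows "eventually (\<lambda>n. \<forall>j. pmf (binomial_pmf n p) j \<le> \<eta>) sequentially"
proof -
  define L :: nat where "L = nat \<lceil>2 / \<eta>\<rceil> + 1"
  have "2 / \<eta> < real L" unfolding L_def by linarith
  moreover have "1 \<le> L" by (simp add: L_def)
  ultimately have L: "1 \<le> L" "2 / real L < \<eta>"
    using \<eta> by (simp_all add: divide_less_eq mult.commute pos_divide_less_eq)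
  have "eventually (\<lambda>n. 2 * real L * (real L + 1) / (p * (1 - p)) \<le> real n) sequentially"
    using filterlim_real_sequentially by (simp add: filterlim_at_top)
  then show ?thesis
  proof eventually_elim
    case (elim n)
    then have large: "2 * real L * (real L + 1) \<le> real n * p * (1 - p)"
      using p by (simp add: field_simps)
    show ?case
    proof
      fix j
      consider "real j \<le> real n * p" | "real n * p < real j" "j \<le> n" | "n < j" by linarith
      then show "pmf (binomial_pmf n p) j \<le> \<eta>"
      proof cases
        case 1
        then show ?thesis using binomial_pmf_le_two_div[OF p L(1) large] L by fastforce
      next
        case 2
        have "pmf (binomial_pmf n (1 - p)) (n - j) \<le> 2 / real L"
          using 2 p large by (intro binomial_pmf_le_two_div L) (auto simp: of_nat_diff algebra_simps)
        moreover have "pmf (binomial_pmf n p) j = pmf (binomial_pmf n (1 - p)) (n - j)"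
          using 2 p by (simp add: binomial_symmetric[of j n] mult.commute mult.left_commute)
        ultimately show ?thesis using L by simp
      next
        case 3
        then show ?thesis using p \<eta> by (simp add: binomial_eq_0)
      qed
    qed
  qed
qed

lemma binomial_tail_tendsto_0:
  fixes p c :: real
  assumes p: "0 \<le> p" "p \<le> 1" and c: "0 < c"
  shows "(\<lambda>n. measure_pmf.prob (binomial_pmf n p) {x. c \<le> \<bar>real x / real n - p\<bar>}) \<longlonglongrightarrow> 0"
proof (rule tendsto_sandwich[OF _ _ tendsto_const])
  have b: "binomial_distribution p" using p by (simp add: binomial_distribution_def)
  show "eventually (\<lambda>n. measure_pmf.prob (binomial_pmf n p) {x. c \<le> \<bar>real x / real n - p\<bar>}
      \<le> 2 * exp (-2 * c\<^sup>2) ^ n) sequentially"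
    using eventually_gt_at_top[of 0]
  proof eventually_elim
    case (elim n)
    have "exp (real_of_int (- 2 * int n) * c\<^sup>2) = exp (-2 * c\<^sup>2) ^ n"
      by (simp add: exp_of_nat_mult[symmetric] algebra_simps)
    then show ?case using binomial_distribution.prob_abs_ge'[OF b elim, of c] c by simp
  qed
  have "(\<lambda>n. 2 * exp (-2 * c\<^sup>2) ^ n) \<longlonglongrightarrow> 2 * 0"
    using c by (intro tendsto_mult tendsto_const LIMSEQ_power_zero) auto
  then show "(\<lambda>n. 2 * exp (-2 * c\<^sup>2) ^ n) \<longlonglongrightarrow> 0" by simp
qed simp

lemma measure_pmf_doubleton_le: "measure_pmf.prob M {a, b} \<le> pmf M a + pmf M b"
proof -
  have "measure_pmf.prob M ({a} \<union> {b}) \<le> measure_pmf.prob M {a} + measure_pmf.prob M {b}"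
    by (rule measure_subadditive) auto
  then show ?thesis by (simp add: measure_pmf_single insert_commute)
qed

lemma alpha_star_Suc_le:
  fixes n :: nat and \<epsilon> :: real
  defines "M \<equiv> binomial_pmf n ((1 - \<epsilon>) / 2)"
  shows "alpha_star n (Suc i) \<epsilon> \<le> alpha_star n i \<epsilon> + pmf M (Suc i) + pmf M (n - Suc i)"
proof -
  define A where "A = {z. i < z \<and> z < n - i}"
  define B where "B = {z. Suc i < z \<and> z < n - Suc i}"
  have "B \<subseteq> A" by (auto simp: A_def B_def)
  have "measure_pmf.prob M A - measure_pmf.prob M B = measure_pmf.prob M (A - B)"
    using \<open>B \<subseteq> A\<close> by (simp add: measure_pmf.finite_measure_Diff)
  also have "\<dots> \<le> measure_pmf.prob M {Suc i, n - Suc i}"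
    by (intro measure_pmf.finite_measure_mono) (auto simp: A_def B_def)
  also have "\<dots> \<le> pmf M (Suc i) + pmf M (n - Suc i)"
    by (rule measure_pmf_doubleton_le)
  finally show ?thesis by (simp add: alpha_star_def A_def B_def M_def)
qed

lemma alpha_star_0_le:
  fixes n :: nat and \<epsilon> :: real
  assumes "0 \<le> \<epsilon>" "\<epsilon> \<le> 1"
  defines "M \<equiv> binomial_pmf n ((1 - \<epsilon>) / 2)"
  shows "alpha_star n 0 \<epsilon> \<le> pmf M 0 + pmf M n"
proof -
  have "alpha_star n 0 \<epsilon> = measure_pmf.prob M (UNIV - {z. 0 < z \<and> z < n})"
    unfolding alpha_star_def M_def by (subst measure_pmf.prob_compl[symmetric]) auto
  also have "\<dots> = measure_pmf.prob M ((UNIV - {z. 0 < z \<and> z < n}) \<inter> set_pmf M)"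
    by (simp add: measure_Int_set_pmf)
  also have "\<dots> \<le> measure_pmf.prob M {0, n}"
  proof (rule measure_pmf.finite_measure_mono)
    have "set_pmf M \<subseteq> {..n}"
      using assms by (auto simp: M_def set_pmf_binomial_eq split: if_splits)
    then show "(UNIV - {z. 0 < z \<and> z < n}) \<inter> set_pmf M \<subseteq> {0, n}" by auto
  qed simp
  also have "\<dots> \<le> pmf M 0 + pmf M n"
    by (rule measure_pmf_doubleton_le)
  finally show ?thesis .
qed

text \<open>The steps of j \<mapsto> alpha_star n j are bounded by two binomial weights, so a minimiser
  of the distance to \<alpha> lands within two such weights of \<alpha>.\<close>
lemma alpha_star_argmin_close:
  assumes "0 \<le> \<alpha>" "\<alpha> \<le> 1" "0 \<le> \<epsilon>" "\<epsilon> \<le> 1"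
    and small: "\<forall>j. pmf (binomial_pmf n ((1 - \<epsilon>) / 2)) j \<le> \<eta>"
    and argmin: "\<forall>j. \<bar>alpha_star n k \<epsilon> - \<alpha>\<bar> \<le> \<bar>alpha_star n j \<epsilon> - \<alpha>\<bar>"
  shows "\<bar>alpha_star n k \<epsilon> - \<alpha>\<bar> \<le> 2 * \<eta>"
proof -
  define j where "j = (LEAST j. \<alpha> \<le> alpha_star n j \<epsilon>)"
  have "\<alpha> \<le> alpha_star n n \<epsilon>" using assms by (simp add: alpha_star_def)
  then have j: "\<alpha> \<le> alpha_star n j \<epsilon>" unfolding j_def by (rule LeastI)
  have "alpha_star n j \<epsilon> \<le> \<alpha> + 2 * \<eta>"
  proof (cases j)
    case 0
    have "alpha_star n 0 \<epsilon> \<le> \<alpha> + 2 * \<eta>"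
      using alpha_star_0_le[of \<epsilon> n] small[rule_format, of 0] small[rule_format, of n] assms
      by linarith
    with 0 show ?thesis by simp
  next
    case (Suc i)
    then have "i < (LEAST j. \<alpha> \<le> alpha_star n j \<epsilon>)" by (simp add: j_def)
    then have "\<not> \<alpha> \<le> alpha_star n i \<epsilon>" by (rule not_less_Least)
    then have "alpha_star n (Suc i) \<epsilon> \<le> \<alpha> + 2 * \<eta>"
      using alpha_star_Suc_le[of n i \<epsilon>] small[rule_format, of "Suc i"]
        small[rule_format, of "n - Suc i"]
      by linarith
    with Suc show ?thesis by simp
  qed
  with j have "\<bar>alpha_star n j \<epsilon> - \<alpha>\<bar> \<le> 2 * \<eta>" by simp
  with argmin show ?thesis by (meson order_trans)
qed

lemma alpha_star_argmin_tendsto: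
  assumes "0 \<le> \<alpha>" "\<alpha> \<le> 1" "0 \<le> \<epsilon>" "\<epsilon> < 1"
    and argmin: "\<forall>n\<ge>1. \<forall>j. \<bar>alpha_star n (k n) \<epsilon> - \<alpha>\<bar> \<le> \<bar>alpha_star n j \<epsilon> - \<alpha>\<bar>"
  shows "(\<lambda>n. alpha_star n (k n) \<epsilon>) \<longlonglongrightarrow> \<alpha>"
proof (rule tendstoI)
  fix r :: real
  assume "0 < r"
  then have "eventually (\<lambda>n. \<forall>j. pmf (binomial_pmf n ((1 - \<epsilon>) / 2)) j \<le> r / 3) sequentially"
    using assms by (intro binomial_pmf_eventually_le) auto
  then show "eventually (\<lambda>n. dist (alpha_star n (k n) \<epsilon>) \<alpha> < r) sequentially"
    using eventually_ge_at_top[of 1]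
  proof eventually_elim
    case (elim n)
    then have "\<bar>alpha_star n (k n) \<epsilon> - \<alpha>\<bar> \<le> 2 * (r / 3)"
      using assms argmin by (intro alpha_star_argmin_close) auto
    with \<open>0 < r\<close> show ?case by (simp add: dist_real_def)
  qed
qed

lemma alpha_star_le_binomial_tail:
  fixes \<epsilon> c :: real
  defines "p \<equiv> (1 - \<epsilon>) / 2"
  assumes "0 \<le> \<epsilon>" "0 < n" "0 < c" and j: "real j / real n \<le> p - c"
  shows "alpha_star n j \<epsilon> \<le> measure_pmf.prob (binomial_pmf n p) {x. c \<le> \<bar>real x / real n - p\<bar>}"
proof -
  have "alpha_star n j \<epsilon> = measure_pmf.prob (binomial_pmf n p) (UNIV - {z. j < z \<and> z < n - j})"
    unfolding alpha_star_def p_def by (subst measure_pmf.prob_compl[symmetric]) auto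
  also have "\<dots> \<le> measure_pmf.prob (binomial_pmf n p) {x. c \<le> \<bar>real x / real n - p\<bar>}"
  proof (rule measure_pmf.finite_measure_mono)
    have "p - c \<le> 1" using \<open>0 \<le> \<epsilon>\<close> \<open>0 < c\<close> unfolding p_def by argo
    with j have "real j / real n \<le> 1" by (rule order_trans)
    then have "real j \<le> real n" using \<open>0 < n\<close> by (simp add: divide_le_eq_1)
    have "c \<le> \<bar>real z / real n - p\<bar>" if "\<not> (j < z \<and> z < n - j)" for z
    proof (cases "z \<le> j")
      case True
      then have "real z / real n \<le> real j / real n" by (simp add: divide_right_mono)
      with j show ?thesis by linarith
    next
      case False
      with that \<open>real j \<le> real n\<close> have "real n - real j \<le> real z" by linarith
      have "1 - real j / real n = (real n - real j) / real n"
        using \<open>0 < n\<close> by (simp add: diff_divide_distrib)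
      also have "\<dots> \<le> real z / real n"
        using \<open>real n - real j \<le> real z\<close> by (simp add: divide_right_mono)
      finally have "1 - real j / real n \<le> real z / real n" .
      moreover have "p \<le> 1 - p" unfolding p_def using \<open>0 \<le> \<epsilon>\<close> by argo
      ultimately have "c \<le> real z / real n - p" using j by linarith
      then show ?thesis by (rule order_trans[OF _ abs_ge_self])
    qed
    then show "UNIV - {z. j < z \<and> z < n - j} \<subseteq> {x. c \<le> \<bar>real x / real n - p\<bar>}" by auto
  qed simp
  finally show ?thesis .
qed

lemma alpha_star_ge_binomial_tail:
  fixes \<epsilon> c :: real
  defines "p \<equiv> (1 - \<epsilon>) / 2"
  assumes j: "p + c \<le> real j / real n"
  shows "1 - measure_pmf.prob (binomial_pmf n p) {x. c \<le> \<bar>real x / real n - p\<bar>} \<le> alpha_star n j \<epsilon>"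
proof -
  have "c \<le> \<bar>real z / real n - p\<bar>" if "j < z" for z
    using that j divide_right_mono[of "real j" "real z" "real n"] by simp
  then have "measure_pmf.prob (binomial_pmf n p) {z. j < z \<and> z < n - j}
      \<le> measure_pmf.prob (binomial_pmf n p) {x. c \<le> \<bar>real x / real n - p\<bar>}"
    by (intro measure_pmf.finite_measure_mono) auto
  then show ?thesis by (simp add: alpha_star_def p_def)
qed

lemma alpha_star_argmin_ratio_tendsto:
  assumes "0 < \<alpha>" "\<alpha> < 1" "0 \<le> \<epsilon>" "\<epsilon> < 1"
    and argmin: "\<forall>n\<ge>1. \<forall>j. \<bar>alpha_star n (k n) \<epsilon> - \<alpha>\<bar> \<le> \<bar>alpha_star n j \<epsilon> - \<alpha>\<bar>"
  shows "(\<lambda>n. real (k n) / real n) \<longlonglongrightarrow> (1 - \<epsilon>) / 2"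
proof (rule tendstoI)
  fix c :: real
  assume c: "0 < c"
  let ?p = "(1 - \<epsilon>) / 2"
  let ?T = "\<lambda>n. measure_pmf.prob (binomial_pmf n ?p) {x. c \<le> \<bar>real x / real n - ?p\<bar>}"
  define d where "d = min \<alpha> (1 - \<alpha>) / 2"
  have d: "0 < d" "d \<le> \<alpha> / 2" "d \<le> (1 - \<alpha>) / 2" using assms by (auto simp: d_def)
  have "eventually (\<lambda>n. ?T n < d) sequentially"
    using assms c by (intro order_tendstoD(2)[OF binomial_tail_tendsto_0 d(1)]) auto
  moreover have "eventually (\<lambda>n. dist (alpha_star n (k n) \<epsilon>) \<alpha> < d) sequentially"
    using assms by (intro tendstoD[OF alpha_star_argmin_tendsto d(1)]) auto
  ultimately show "eventually (\<lambda>n. dist (real (k n) / real n) ?p < c) sequentially"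
    using eventually_gt_at_top[of 0]
  proof eventually_elim
    case (elim n)
    then have "\<alpha> - d < alpha_star n (k n) \<epsilon>" "alpha_star n (k n) \<epsilon> < \<alpha> + d"
      by (auto simp: dist_real_def abs_less_iff)
    then have "\<not> real (k n) / real n \<le> ?p - c" "\<not> ?p + c \<le> real (k n) / real n"
      using alpha_star_le_binomial_tail[of \<epsilon> n c "k n"]
        alpha_star_ge_binomial_tail[of \<epsilon> c "k n" n] elim assms c d
      by fastforce+
    then show ?case by (simp add: dist_real_def)
  qed
qed

section \<open>Quantiles and symmetric unimodal densities\<close>

lemma ge_if_isCont_at_right:
  fixes g :: "real \<Rightarrow> real"
  assumes "isCont g x" "\<forall>\<^sub>F y in at_right x. c \<le> g y"
  shows "c \<le> g x"
  using assms by (intro tendsto_lowerbound[of g "g x" "at_right x"])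
    (auto simp: isCont_def intro: tendsto_mono[OF at_le])

lemma le_if_isCont_at_left:
  fixes g :: "real \<Rightarrow> real"
  assumes "isCont g x" "\<forall>\<^sub>F y in at_left x. g y \<le> c"
  shows "g x \<le> c"
  using assms by (intro tendsto_upperbound[of g "g x" "at_left x"])
    (auto simp: isCont_def intro: tendsto_mono[OF at_le])

lemma increment_le_if_isCont:
  fixes g :: "real \<Rightarrow> real"
  assumes "l < u" "isCont g l" "isCont g u"
    and increment: "\<And>s t. l < s \<Longrightarrow> s \<le> t \<Longrightarrow> t < u \<Longrightarrow> g t - g s \<le> w"
  shows "g u - g l \<le> w"
proof -
  have left_end: "g t - w \<le> g l" if "l < t" "t < u" for t
  proof (rule ge_if_isCont_at_right[where g=g])
    show "\<forall>\<^sub>F s in at_right l. g t - w \<le> g s"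
      using that increment by (intro eventually_at_rightI[of l t]) (auto simp: algebra_simps)
  qed (rule assms(2))
  have "g u \<le> w + g l"
  proof (rule le_if_isCont_at_left[where g=g])
    show "\<forall>\<^sub>F t in at_left u. g t \<le> w + g l"
      using left_end \<open>l < u\<close> by (intro eventually_at_leftI[of l u]) (auto simp: algebra_simps)
  qed (rule assms(3))
  then show ?thesis by simp
qed

context real_distribution
begin

lemma quantile_bdd_below: "0 < p \<Longrightarrow> bdd_below {x. p \<le> cdf M x}"
proof -
  assume "0 < p"
  then obtain b where b: "\<forall>x\<le>b. cdf M x < p"
    using order_tendstoD(2)[OF cdf_lim_at_bot] by (auto simp: eventually_at_bot_linorder)
  have "b \<le> x" if "p \<le> cdf M x" for x
    using b that by (metis not_le order_less_imp_le)
  then show ?thesis by (auto intro: bdd_belowI[of _ b])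
qed

lemma quantile_nonempty: "p < 1 \<Longrightarrow> {x. p \<le> cdf M x} \<noteq> {}"
  using order_tendstoD(1)[OF cdf_lim_at_top_prob, of p]
  by (auto simp: eventually_at_top_linorder intro: less_imp_le)

lemma quantile_le: "0 < p \<Longrightarrow> p \<le> cdf M x \<Longrightarrow> quantile (cdf M) p \<le> x"
  unfolding quantile_def by (intro cInf_lower quantile_bdd_below) auto

lemma cdf_less_if_less_quantile: "0 < p \<Longrightarrow> x < quantile (cdf M) p \<Longrightarrow> cdf M x < p"
  using quantile_le[of p x] by force

lemma cdf_quantile:
  assumes p: "0 < p" "p < 1" and cont: "isCont (cdf M) (quantile (cdf M) p)"
  shows "cdf M (quantile (cdf M) p) = p"
proof (rule antisym)
  let ?q = "quantile (cdf M) p"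
  have lim: "(cdf M \<longlongrightarrow> cdf M ?q) (at_left ?q)" "(cdf M \<longlongrightarrow> cdf M ?q) (at_right ?q)"
    using cont by (simp_all add: isCont_def filterlim_at_split)
  show "cdf M ?q \<le> p"
    by (rule tendsto_upperbound[OF lim(1)])
      (auto simp: eventually_at_left_field intro!: exI[of _ "?q - 1"] less_imp_le
        cdf_less_if_less_quantile p)
  have "p \<le> cdf M y" if "?q < y" for y
  proof -
    obtain x where "p \<le> cdf M x" "x < y"
      using \<open>?q < y\<close> cInf_less_iff[OF quantile_nonempty quantile_bdd_below] p
      unfolding quantile_def by blast
    then show ?thesis using cdf_nondecreasing[of x y] by simp
  qed
  then show "p \<le> cdf M ?q"
    by (intro tendsto_lowerbound[OF lim(2)])
      (auto simp: eventually_at_right_field intro!: exI[of _ "?q + 1"])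
qed

end

locale symmetric_unimodal_density =
  fixes F :: "real measure" and f :: "real \<Rightarrow> real" and \<theta> :: real
  assumes F_distr: "real_distribution F"
    and F_cont: "\<forall>x. isCont (cdf F) x"
    and f_nonneg: "\<forall>x. 0 \<le> f x"
    and f_meas [measurable]: "f \<in> borel_measurable borel"
    and F_density: "F = density lborel (\<lambda>x. ennreal (f x))"
    and f_symm: "\<forall>t. f (\<theta> + t) = f (\<theta> - t)"
    and f_unimodal: "mono_on {..\<theta>} f \<and> antimono_on {\<theta>..} f"
begin

sublocale F: real_distribution F by (rule F_distr)

abbreviation Q :: "real \<Rightarrow> real" where "Q \<equiv> quantile (cdf F)"

lemma emeasure_F: "A \<in> sets borel \<Longrightarrow> emeasure F A = (\<integral>\<^sup>+ x. ennreal (f x) * indicator A x \<partial>lborel)"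
  unfolding F_density by (subst emeasure_density) auto

lemma measure_F_atLeast: "measure F {a..} = 1 - cdf F a"
proof -
  have "measure F {a} = 0" using F_cont F.isCont_cdf by blast
  then have "measure F {..<a} = cdf F a"
    using F.finite_measure_Union[of "{..<a}" "{a}"] by (simp add: cdf_def ivl_disj_un(2)[symmetric])
  moreover have "{a..} = UNIV - {..<a}" by auto
  ultimately show ?thesis using F.prob_compl[of "{..<a}"] by (simp add: Compl_eq_Diff_UNIV)
qed

lemma f_reflect: "f (2 * \<theta> - x) = f x"
  using f_symm[rule_format, of "\<theta> - x"] by (simp add: algebra_simps)

lemma cdf_symmetric: "cdf F (\<theta> - t) = 1 - cdf F (\<theta> + t)"
proof -
  have "emeasure F {..\<theta> - t} = (\<integral>\<^sup>+ x. ennreal (f x) * indicator {..\<theta> - t} x \<partial>lborel)"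
    by (rule emeasure_F) auto
  also have "\<dots> = ennreal \<bar>-1\<bar> * (\<integral>\<^sup>+ x. ennreal (f (2*\<theta> + (-1) * x)) * indicator {..\<theta> - t} (2*\<theta> + (-1) * x) \<partial>lborel)"
    by (rule nn_integral_real_affine) auto
  also have "\<dots> = (\<integral>\<^sup>+ x. ennreal (f x) * indicator {\<theta> + t..} x \<partial>lborel)"
  proof -
    have "ennreal (f (2*\<theta> + (-1) * x)) * indicator {..\<theta> - t} (2*\<theta> + (-1) * x)
        = ennreal (f x) * indicator {\<theta> + t..} x" for x
      using f_reflect[of x] by (auto simp: indicator_def)
    then show ?thesis by simp
  qed
  also have "\<dots> = emeasure F {\<theta> + t..}" by (rule emeasure_F[symmetric]) auto
  finally have "measure F {..\<theta> - t} = measure F {\<theta> + t..}" by (simp add: F.emeasure_eq_measure)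
  then show ?thesis by (simp add: cdf_def measure_F_atLeast)
qed

lemma density_le_shift:
  assumes "0 \<le> L" "2 * s + L \<le> 2 * \<theta>"
  shows "f s \<le> f (s + L)"
proof (cases "s + L \<le> \<theta>")
  case True
  with assms show ?thesis by (intro mono_onD[OF conjunct1[OF f_unimodal]]) auto
next
  case False
  with assms have "f s \<le> f (2 * \<theta> - (s + L))"
    by (intro mono_onD[OF conjunct1[OF f_unimodal]]) auto
  then show ?thesis by (simp add: f_reflect)
qed

text \<open>The hypothesis 2 * y + L \<le> 2 * \<theta> says that the window [y, y + L] is centred left of the
  mode, so every point of (x, y] carries no more density than its translate by L.\<close>
lemma cdf_increment_le_shift:
  assumes xy: "x \<le> y" and "0 \<le> L" "2 * y + L \<le> 2 * \<theta>"
  shows "cdf F y - cdf F x \<le> cdf F (y + L) - cdf F (x + L)"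
proof -
  have "emeasure F {x<..y} = (\<integral>\<^sup>+ s. ennreal (f s) * indicator {x<..y} s \<partial>lborel)"
    by (rule emeasure_F) auto
  also have "\<dots> \<le> (\<integral>\<^sup>+ s. ennreal (f (L + 1 * s)) * indicator {x+L<..y+L} (L + 1 * s) \<partial>lborel)"
  proof (rule nn_integral_mono)
    fix s
    have "f s \<le> f (s + L)" if "s \<in> {x<..y}"
      using that assms by (intro density_le_shift) auto
    then show "ennreal (f s) * indicator {x<..y} s
        \<le> ennreal (f (L + 1 * s)) * indicator {x+L<..y+L} (L + 1 * s)"
      by (auto simp: indicator_def add.commute intro!: ennreal_leI)
  qed
  also have "\<dots> = ennreal \<bar>1\<bar> * (\<integral>\<^sup>+ s. ennreal (f (L + 1 * s)) * indicator {x+L<..y+L} (L + 1 * s) \<partial>lborel)"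
    by simp
  also have "\<dots> = (\<integral>\<^sup>+ s. ennreal (f s) * indicator {x+L<..y+L} s \<partial>lborel)"
    by (rule nn_integral_real_affine[symmetric]) auto
  also have "\<dots> = emeasure F {x+L<..y+L}" by (rule emeasure_F[symmetric]) auto
  finally have "measure F {x<..y} \<le> measure F {x+L<..y+L}"
    by (simp add: F.emeasure_eq_measure)
  with xy show ?thesis
    by (cases "x = y") (simp_all add: F.cdf_diff_eq)
qed

text \<open>A unimodal density vanishing at an interior point vanishes on a whole half-line.\<close>
lemma cdf_strict_mono:
  assumes xy: "x < y" and "0 < cdf F x" "cdf F y < 1"
  shows "cdf F x < cdf F y"
proof (rule ccontr)
  assume "\<not> cdf F x < cdf F y"
  then have "cdf F x = cdf F y" using F.cdf_nondecreasing[of x y] xy by simp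
  then have "measure F {x<..y} = 0" using F.cdf_diff_eq[OF xy] by simp
  then have "AE s in lborel. ennreal (f s) * indicator {x<..y} s = 0"
    using emeasure_F[of "{x<..y}"] by (simp add: F.emeasure_eq_measure nn_integral_0_iff_AE)
  then have AE_zero: "AE s in lborel. s \<in> {x<..<y} \<longrightarrow> f s = 0"
    by eventually_elim (auto simp: indicator_def ennreal_eq_0_iff dest: order_antisym[OF _ f_nonneg[rule_format]])
  have "\<exists>s\<in>{x<..<y}. f s = 0"
  proof (rule ccontr)
    assume "\<not> (\<exists>s\<in>{x<..<y}. f s = 0)"
    with AE_zero have "AE s in lborel. s \<notin> {x<..<y}"
      by (auto elim: eventually_mono)
    then have "emeasure lborel {x<..<y} = 0" by (subst (asm) AE_iff_measurable) auto
    with xy show False by simp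
  qed
  then obtain s where s: "x < s" "s < y" "f s = 0" by auto
  show False
  proof (cases "s \<le> \<theta>")
    case True
    then have "f r = 0" if "r \<le> s" for r
      using mono_onD[OF conjunct1[OF f_unimodal], of r s] that s f_nonneg by (simp add: order_antisym)
    then have "(\<lambda>r. ennreal (f r) * indicator {..s} r) = (\<lambda>_. 0)"
      by (auto simp: indicator_def fun_eq_iff)
    then have "emeasure F {..s} = 0" using emeasure_F[of "{..s}"] by simp
    then have "cdf F s = 0" by (simp add: F.emeasure_eq_measure cdf_def)
    with F.cdf_nondecreasing[of x s] s \<open>0 < cdf F x\<close> show False by simp
  next
    case False
    then have "f r = 0" if "s \<le> r" for r
      using monotone_onD[OF conjunct2[OF f_unimodal], of s r] that s f_nonneg by (simp add: order_antisym)
    then have "(\<lambda>r. ennreal (f r) * indicator {s..} r) = (\<lambda>_. 0)"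
      by (auto simp: indicator_def fun_eq_iff)
    then have "emeasure F {s..} = 0" using emeasure_F[of "{s..}"] by simp
    then have "measure F {s..} = 0" by (simp add: F.emeasure_eq_measure)
    then have "cdf F s = 1" using measure_F_atLeast[of s] by simp
    with F.cdf_nondecreasing[of s y] s \<open>cdf F y < 1\<close> show False by simp
  qed
qed

lemma cdf_Q: "0 < p \<Longrightarrow> p < 1 \<Longrightarrow> cdf F (Q p) = p"
  using F.cdf_quantile F_cont by blast

lemma Q_less_imp: assumes p: "0 < p" "p < 1" and "Q p < x" shows "p < cdf F x"
  using cdf_strict_mono[OF \<open>Q p < x\<close>] cdf_Q[OF p] p F.cdf_bounded_prob[of x]
  by (cases "cdf F x < 1") auto

lemma Q_unique: "0 < p \<Longrightarrow> p < 1 \<Longrightarrow> cdf F x = p \<Longrightarrow> Q p = x"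
  using F.quantile_le[of p x] Q_less_imp[of p x] by force

lemma Q_symmetric: "0 < p \<Longrightarrow> p < 1 \<Longrightarrow> Q (1 - p) = 2 * \<theta> - Q p"
  using cdf_symmetric[of "Q p - \<theta>"] cdf_Q[of p] by (intro Q_unique) auto

lemma Q_mono: "0 < p \<Longrightarrow> p \<le> p' \<Longrightarrow> p' < 1 \<Longrightarrow> Q p \<le> Q p'"
  using F.quantile_le[of p "Q p'"] cdf_Q[of p'] by simp

definition window_mass :: "real \<Rightarrow> real \<Rightarrow> real" where
  "window_mass L x = cdf F (x + L) - cdf F x"

lemma window_mass_reflect: "window_mass L x = window_mass L (2 * \<theta> - L - x)"
  using cdf_symmetric[of "x + L - \<theta>"] cdf_symmetric[of "x - \<theta>"]
  by (simp add: window_mass_def algebra_simps)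

lemma window_mass_quasiconcave:
  assumes "a \<le> b" "b \<le> c" "0 \<le> L"
  shows "min (window_mass L a) (window_mass L c) \<le> window_mass L b"
proof (cases "2 * b + L \<le> 2 * \<theta>")
  case True
  then have "window_mass L a \<le> window_mass L b"
    using cdf_increment_le_shift[OF assms(1,3)] by (simp add: window_mass_def)
  then show ?thesis by simp
next
  case False
  then have "window_mass L (2 * \<theta> - L - c) \<le> window_mass L (2 * \<theta> - L - b)"
    using cdf_increment_le_shift[of "2 * \<theta> - L - c" "2 * \<theta> - L - b" L] assms
    by (simp add: window_mass_def)
  then show ?thesis by (simp add: window_mass_reflect[symmetric])
qed

text \<open>Inside the band [Q (1 - b), Q b], which is symmetric about \<theta>, an interval of mass at most
  b - a is no longer than the extreme window [Q a, Q b]: otherwise, by quasi-concavity, the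
  window of the same length starting at l would carry more than b - a.\<close>
lemma length_le_Q_gap:
  assumes ab: "a \<le> b" "b < 1" "1 \<le> a + b"
    and l: "1 - b \<le> cdf F l" and u: "cdf F u \<le> b" and mass: "cdf F u - cdf F l \<le> b - a"
  shows "u - l \<le> Q b - Q a"
proof (rule ccontr)
  define L where "L = u - l"
  assume "\<not> u - l \<le> Q b - Q a"
  then have long: "Q b - Q a < L" by (simp add: L_def)
  have ranges: "0 < a" "a < 1" "0 < b" "0 < 1 - a" "0 < 1 - b" "1 - a < 1" "1 - b < 1"
    using ab by auto
  have "0 \<le> L" using long Q_mono[of a b] ranges ab by simp
  have "Q (1 - b) \<le> l" using F.quantile_le[OF _ l] ranges by simp
  moreover have "u \<le> Q b" using Q_less_imp[of b u] ranges u by force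
  then have "l \<le> Q b - L" by (simp add: L_def)
  moreover have "b - a < window_mass L (Q b - L)"
  proof -
    have "cdf F (Q b - L) < a"
      using long ranges by (intro F.cdf_less_if_less_quantile) auto
    then show ?thesis using cdf_Q[of b] ranges by (simp add: window_mass_def)
  qed
  moreover have "b - a < window_mass L (Q (1 - b))"
  proof -
    have "1 - a < cdf F (Q (1 - b) + L)"
      using long ranges Q_symmetric[of a] Q_symmetric[of b] by (intro Q_less_imp) auto
    then show ?thesis using cdf_Q[of "1 - b"] ranges by (simp add: window_mass_def add.commute)
  qed
  ultimately have "b - a < window_mass L l"
    using window_mass_quasiconcave[of "Q (1 - b)" l "Q b - L" L] \<open>0 \<le> L\<close> by linarith
  with mass show False by (simp add: window_mass_def L_def)
qed

end

section \<open>Independent samples\<close>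

lemma prob_space_iid: "real_distribution G \<Longrightarrow> prob_space (iid G)"
  unfolding iid_def by (intro prob_space_PiM) (auto simp: real_distribution_def)

lemma sets_iid: "real_distribution G \<Longrightarrow> sets (iid G) = sets (\<Pi>\<^sub>M i\<in>UNIV. borel)"
  unfolding iid_def by (intro sets_PiM_cong) (auto simp: real_distribution.events_eq_borel)

lemma space_iid: "real_distribution G \<Longrightarrow> space (iid G) = UNIV"
  unfolding iid_def by (simp add: space_PiM real_distribution.space_eq_univ)

lemma measurable_iid:
  "real_distribution G \<Longrightarrow> g \<in> measurable (\<Pi>\<^sub>M i\<in>UNIV. borel) N \<Longrightarrow> g \<in> measurable (iid G) N"
  by (subst measurable_cong_sets[OF sets_iid refl])

lemma distr_iid_component:
  assumes G: "real_distribution G"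
  shows "distr (iid G) borel (\<lambda>\<omega>. \<omega> i) = G"
proof -
  interpret product_prob_space "\<lambda>_::nat. G" UNIV
    using G by (simp add: product_prob_space_def product_sigma_finite_def product_prob_space_axioms_def
        prob_space_imp_sigma_finite real_distribution_def)
  have "distr (iid G) G (\<lambda>\<omega>. \<omega> i) = G" unfolding iid_def by (rule PiM_component) simp
  moreover have "distr (iid G) borel (\<lambda>\<omega>. \<omega> i) = distr (iid G) G (\<lambda>\<omega>. \<omega> i)"
    using G by (intro distr_cong) (auto simp: real_distribution.events_eq_borel)
  ultimately show ?thesis by simp
qed

lemma indep_vars_iid:
  assumes G: "real_distribution G"
  shows "prob_space.indep_vars (iid G) (\<lambda>_. borel) (\<lambda>i \<omega>. \<omega> i) UNIV"
proof -
  interpret P: prob_space "iid G" by (rule prob_space_iid[OF G])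
  have "distr (iid G) (\<Pi>\<^sub>M i\<in>UNIV. borel) (\<lambda>x. \<lambda>i\<in>UNIV. x i) = iid G"
    by (simp add: distr_id2 sets_iid[OF G] restrict_UNIV)
  also have "\<dots> = (\<Pi>\<^sub>M i\<in>UNIV. distr (iid G) borel (\<lambda>x. x i))"
    using distr_iid_component[OF G] by (simp add: iid_def)
  finally show ?thesis
    using G by (subst P.indep_vars_iff_distr_eq_PiM) (auto intro: measurable_iid)
qed

lemma iid_frequency_deviation_le:
  assumes G: "real_distribution G" and A [measurable]: "A \<in> sets borel" and n: "0 < n" and c: "0 \<le> c"
  shows "measure (iid G) {\<omega>. c \<le> \<bar>real (card {i\<in>{..<n}. \<omega> i \<in> A}) / real n - measure G A\<bar>}
           \<le> 2 * exp (-2 * c\<^sup>2) ^ n"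
proof -
  interpret P: prob_space "iid G" by (rule prob_space_iid[OF G])
  interpret G: real_distribution G by (rule G)
  define X where "X = (\<lambda>(i::nat) (\<omega>::nat\<Rightarrow>real). indicator A (\<omega> i) :: real)"
  have [measurable]: "X i \<in> borel_measurable (iid G)" for i
    unfolding X_def by (rule measurable_iid[OF G]) measurable
  have distr_X: "distr (iid G) borel (X i) = distr G borel (indicator A)" for i
  proof -
    have "distr (iid G) borel (X i) = distr (distr (iid G) borel (\<lambda>\<omega>. \<omega> i)) borel (indicator A)"
      unfolding X_def by (subst distr_distr) (auto simp: o_def intro!: measurable_iid[OF G])
    then show ?thesis by (simp add: distr_iid_component[OF G])
  qed
  have "P.expectation (X 0) = integral\<^sup>L (distr (iid G) borel (X 0)) (\<lambda>x. x)"
    by (rule integral_distr[symmetric]) auto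
  also have "\<dots> = integral\<^sup>L G (indicator A)"
    unfolding distr_X by (rule integral_distr) auto
  finally have mean: "measure G A = P.expectation (X 0)" by simp
  interpret H: Hoeffding_ineq_iid "iid G" "{..<n}" X "X 0" 0 1 "measure G A"
  proof unfold_locales
    have "P.indep_vars (\<lambda>_. borel) (\<lambda>i \<omega>. indicator A ((\<lambda>i \<omega>. \<omega> i) i \<omega>) :: real) UNIV"
      by (rule P.indep_vars_compose2[OF indep_vars_iid[OF G]]) measurable
    then show "P.indep_vars (\<lambda>_. borel) X {..<n}"
      unfolding X_def by (rule P.indep_vars_subset) auto
    show "distr (iid G) borel (X i) = distr (iid G) borel (X 0)" for i by (simp add: distr_X)
    show "AE x in iid G. X 0 x \<in> {0..1}" by (auto simp: X_def indicator_def)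
    show "measure G A \<equiv> P.expectation (X 0)" using mean by simp
  qed simp_all
  have sum_X: "(\<Sum>i<n. X i \<omega>) = real (card {i\<in>{..<n}. \<omega> i \<in> A})" for \<omega>
    by (simp add: X_def indicator_def sum.If_cases Int_def)
  have "real n * c \<le> \<bar>y - real n * m\<bar> \<longleftrightarrow> c \<le> \<bar>y / real n - m\<bar>" for y m
  proof -
    have "\<bar>y - real n * m\<bar> = real n * \<bar>y / real n - m\<bar>"
      using n by (simp add: field_simps abs_mult[symmetric])
    then show ?thesis using n by simp
  qed
  then have "{\<omega>. c \<le> \<bar>real (card {i\<in>{..<n}. \<omega> i \<in> A}) / real n - measure G A\<bar>}
      = {x \<in> space (iid G). real n * c \<le> \<bar>(\<Sum>i\<in>{..<n}. X i x) - real (card {..<n}) * measure G A\<bar>}"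
    by (auto simp: space_iid[OF G] sum_X)
  also have "P.prob \<dots> \<le> 2 * exp (- 2 * (real n * c)\<^sup>2 / (real (card {..<n}) * (1 - 0)\<^sup>2))"
    using H.Hoeffding_ineq_abs_ge[of "real n * c"] n c by (simp add: lessThan_empty_iff)
  also have "- 2 * (real n * c)\<^sup>2 / (real (card {..<n}) * (1 - 0)\<^sup>2) = real n * (-2 * c\<^sup>2)"
    using n by (simp add: power2_eq_square field_simps)
  also have "exp (real n * (-2 * c\<^sup>2)) = exp (-2 * c\<^sup>2) ^ n"
    by (rule exp_of_nat_mult)
  finally show ?thesis .
qed

text \<open>The strong law of large numbers for empirical frequencies, via Hoeffding's inequality and
  Borel-Cantelli.\<close>
lemma iid_frequency_tendsto:
  assumes G: "real_distribution G" and A [measurable]: "A \<in> sets borel"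
  shows "AE \<omega> in iid G. (\<lambda>n. real (card {i\<in>{..<n}. \<omega> i \<in> A}) / real n) \<longlonglongrightarrow> measure G A"
proof -
  interpret P: prob_space "iid G" by (rule prob_space_iid[OF G])
  define D where "D = (\<lambda>n (\<omega>::nat \<Rightarrow> real). \<bar>real (card {i\<in>{..<n}. \<omega> i \<in> A}) / real n - measure G A\<bar>)"
  have [measurable]: "D n \<in> borel_measurable (iid G)" for n
    unfolding D_def by (rule measurable_iid[OF G]) measurable
  have "AE \<omega> in iid G. eventually (\<lambda>n. D n \<omega> < c) sequentially" if "0 < c" for c
  proof -
    have "AE \<omega> in iid G. eventually (\<lambda>n. \<omega> \<in> space (iid G) - {\<omega>. c \<le> D n \<omega>}) sequentially"
    proof (rule borel_cantelli_AE1)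
      show "{\<omega>. c \<le> D n \<omega>} \<in> sets (iid G)" for n
        using space_iid[OF G] measurable_sets[of "D n" "iid G" borel "{c..}"] by (simp add: vimage_def)
      show "emeasure (iid G) {\<omega>. c \<le> D n \<omega>} < \<infinity>" for n by (simp add: P.emeasure_eq_measure)
      show "summable (\<lambda>n. measure (iid G) {\<omega>. c \<le> D n \<omega>})"
      proof (rule summable_comparison_test_ev)
        show "eventually (\<lambda>n. norm (measure (iid G) {\<omega>. c \<le> D n \<omega>}) \<le> 2 * exp (-2 * c\<^sup>2) ^ n) sequentially"
          using eventually_gt_at_top[of 0]
          by eventually_elim (use iid_frequency_deviation_le[OF G A] that in \<open>auto simp: D_def\<close>)
        show "summable (\<lambda>n. 2 * exp (-2 * c\<^sup>2) ^ n)"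
          using that by (intro summable_mult summable_geometric) auto
      qed
    qed
    then show ?thesis by eventually_elim (auto simp: not_le elim!: eventually_mono)
  qed
  then have "AE \<omega> in iid G. \<forall>m. eventually (\<lambda>n. D n \<omega> < inverse (real (Suc m))) sequentially"
    by (subst AE_all_countable) auto
  then show ?thesis
  proof eventually_elim
    case (elim \<omega>)
    show ?case
    proof (rule tendstoI)
      fix r :: real
      assume "0 < r"
      then obtain m where "inverse (real (Suc m)) < r" using reals_Archimedean by blast
      with elim[rule_format, of m] show "eventually (\<lambda>n. dist (real (card {i\<in>{..<n}. \<omega> i \<in> A}) / real n) (measure G A) < r) sequentially"
        by (auto simp: D_def dist_real_def elim: eventually_mono)
    qed
  qed
qed

lemma distr_iid_mem:
  assumes G: "real_distribution G" and A: "A \<in> sets borel"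
  shows "distr (iid G) (count_space UNIV) (\<lambda>\<omega>. \<omega> i \<in> A) = measure_pmf (bernoulli_pmf (measure G A))"
proof -
  interpret RG: real_distribution G by (rule G)
  have mA: "(\<lambda>x::real. x \<in> A) \<in> measurable borel (count_space UNIV)" using A by measurable
  have "distr (iid G) (count_space UNIV) (\<lambda>\<omega>. \<omega> i \<in> A) = distr (distr (iid G) borel (\<lambda>\<omega>. \<omega> i)) (count_space UNIV) (\<lambda>x. x \<in> A)"
    by (subst distr_distr) (auto simp: o_def intro!: measurable_iid[OF G] mA)
  also have "\<dots> = distr G (count_space UNIV) (\<lambda>x. x \<in> A)" by (simp add: distr_iid_component[OF G])
  also have "\<dots> = measure_pmf (bernoulli_pmf (measure G A))"
  proof (rule measure_eqI_countable[where A=UNIV])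
    fix b :: bool
    have q: "0 \<le> measure G A" "measure G A \<le> 1" by auto
    show "emeasure (distr G (count_space UNIV) (\<lambda>x. x \<in> A)) {b} = emeasure (measure_pmf (bernoulli_pmf (measure G A))) {b}"
    proof (cases b)
      case True
      have "emeasure (distr G (count_space UNIV) (\<lambda>x. x \<in> A)) {b} = emeasure G A"
        using True A by (subst emeasure_distr) (auto intro!: mA arg_cong[where f="emeasure G"])
      then show ?thesis using True q by (simp add: emeasure_pmf_single RG.emeasure_eq_measure)
    next
      case False
      have "emeasure (distr G (count_space UNIV) (\<lambda>x. x \<in> A)) {b} = emeasure G (UNIV - A)"
        using False A by (subst emeasure_distr) (auto intro!: mA arg_cong[where f="emeasure G"])
      also have "\<dots> = ennreal (1 - measure G A)"
        using A RG.prob_compl[of A] by (simp add: RG.emeasure_eq_measure Compl_eq_Diff_UNIV)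
      finally show ?thesis using False q by (simp add: emeasure_pmf_single)
    qed
  qed auto
  finally show ?thesis .
qed

lemma distr_Pi_bernoulli_pmf:
  fixes n :: nat
  assumes "n \<noteq> 0"
  shows "distr (Pi_pmf {..<n} False (\<lambda>_. bernoulli_pmf q)) (\<Pi>\<^sub>M i\<in>{..<n}. count_space UNIV)
           (\<lambda>f. restrict f {..<n})
       = (\<Pi>\<^sub>M i\<in>{..<n}. measure_pmf (bernoulli_pmf q))"
proof -
  define coins where "coins = Pi_pmf {..<n} False (\<lambda>_. bernoulli_pmf q)"
  have "{..<n} \<noteq> {}" using assms by auto
  moreover have "prob_space.indep_vars (measure_pmf coins) (\<lambda>_. count_space UNIV) (\<lambda>x f. f x) {..<n}"
    unfolding coins_def by (rule indep_vars_Pi_pmf) simp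
  ultimately have "distr (measure_pmf coins) (\<Pi>\<^sub>M i\<in>{..<n}. count_space UNIV) (\<lambda>f. \<lambda>i\<in>{..<n}. f i)
      = (\<Pi>\<^sub>M i\<in>{..<n}. distr (measure_pmf coins) (count_space UNIV) (\<lambda>f. f i))"
    by (subst (asm) prob_space.indep_vars_iff_distr_eq_PiM'[OF measure_pmf.prob_space_axioms]) auto
  also have "\<dots> = (\<Pi>\<^sub>M i\<in>{..<n}. measure_pmf (bernoulli_pmf q))"
    by (intro PiM_cong) (simp_all add: map_pmf_rep_eq[symmetric] coins_def Pi_pmf_component)
  finally show ?thesis by (simp add: coins_def restrict_def)
qed

lemma distr_iid_mem_vector:
  fixes n :: nat
  assumes G: "real_distribution G" and A [measurable]: "A \<in> sets borel" and "n \<noteq> 0"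
  shows "distr (iid G) (\<Pi>\<^sub>M i\<in>{..<n}. count_space UNIV) (\<lambda>\<omega>. \<lambda>i\<in>{..<n}. \<omega> i \<in> A)
       = (\<Pi>\<^sub>M i\<in>{..<n}. measure_pmf (bernoulli_pmf (measure G A)))"
proof -
  interpret P: prob_space "iid G" by (rule prob_space_iid[OF G])
  have "P.indep_vars (\<lambda>_. count_space UNIV) (\<lambda>i \<omega>. (\<lambda>x. x \<in> A) ((\<lambda>i \<omega>. \<omega> i) i \<omega>)) UNIV"
    by (rule P.indep_vars_compose2[OF indep_vars_iid[OF G]]) measurable
  then have "P.indep_vars (\<lambda>_. count_space UNIV) (\<lambda>i \<omega>. \<omega> i \<in> A) {..<n}"
    by (rule P.indep_vars_subset) auto
  moreover have "(\<lambda>\<omega>::nat\<Rightarrow>real. \<omega> i \<in> A) \<in> measurable (iid G) (count_space UNIV)" for i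
    by (rule measurable_iid[OF G]) measurable
  ultimately have "distr (iid G) (\<Pi>\<^sub>M i\<in>{..<n}. count_space UNIV) (\<lambda>\<omega>. \<lambda>i\<in>{..<n}. \<omega> i \<in> A)
      = (\<Pi>\<^sub>M i\<in>{..<n}. distr (iid G) (count_space UNIV) (\<lambda>\<omega>. \<omega> i \<in> A))"
    using \<open>n \<noteq> 0\<close> by (subst (asm) P.indep_vars_iff_distr_eq_PiM') auto
  then show ?thesis by (simp add: distr_iid_mem[OF G A])
qed

lemma measure_iid_count:
  assumes G: "real_distribution G" and A [measurable]: "A \<in> sets borel"
  shows "measure (iid G) {\<omega>. P (card {i\<in>{..<n}. \<omega> i \<in> A})}
       = measure_pmf.prob (binomial_pmf n (measure G A)) {z. P z}"
proof (cases "n = 0")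
  case True
  interpret P: prob_space "iid G" by (rule prob_space_iid[OF G])
  interpret G: real_distribution G by (rule G)
  have "measure G A \<in> {0..1}" by simp
  with True show ?thesis
    by (cases "P 0") (auto simp: binomial_pmf_0 space_iid[OF G] P.prob_space[symmetric])
next
  case False
  interpret G: real_distribution G by (rule G)
  let ?N = "\<Pi>\<^sub>M i\<in>{..<n}. count_space (UNIV :: bool set)"
  define q where "q = measure G A"
  define coins where "coins = Pi_pmf {..<n} False (\<lambda>_. bernoulli_pmf q)"
  define V where "V = (\<lambda>\<omega>::nat\<Rightarrow>real. \<lambda>i\<in>{..<n}. \<omega> i \<in> A)"
  define S where "S = {v \<in> space ?N. P (card {i\<in>{..<n}. v i})}"
  have S: "S \<in> sets ?N"
    unfolding S_def using count_set_measurable[of "{True}" "count_space UNIV" n "{..<n}" P] by simp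
  have V: "V \<in> measurable (iid G) ?N"
    unfolding V_def by (rule measurable_iid[OF G]) measurable
  have "{\<omega>. P (card {i\<in>{..<n}. \<omega> i \<in> A})} = V -` S \<inter> space (iid G)"
    by (auto simp: S_def V_def space_iid[OF G] space_PiM cong: conj_cong)
  then have "measure (iid G) {\<omega>. P (card {i\<in>{..<n}. \<omega> i \<in> A})} = measure (distr (iid G) ?N V) S"
    by (simp add: measure_distr[OF V S])
  also have "\<dots> = measure (distr (measure_pmf coins) ?N (\<lambda>f. restrict f {..<n})) S"
    using False by (simp add: V_def coins_def q_def distr_iid_mem_vector[OF G A] distr_Pi_bernoulli_pmf)
  also have "\<dots> = measure_pmf.prob coins {f. P (card {i\<in>{..<n}. f i})}"
    by (subst measure_distr) (auto simp: S space_PiM S_def cong: conj_cong)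
  also have "\<dots> = measure_pmf.prob (map_pmf (\<lambda>f. card {x\<in>{..<n}. f x}) coins) {z. P z}"
    by simp
  also have "map_pmf (\<lambda>f. card {x\<in>{..<n}. f x}) coins = binomial_pmf n q"
    unfolding coins_def q_def by (rule binomial_pmf_altdef'[symmetric]) auto
  finally show ?thesis by (simp add: q_def)
qed

lemma ostat_sample_eventually_le:
  assumes G: "real_distribution G"
    and j: "(\<lambda>n. real (j n) / real n) \<longlonglongrightarrow> r" "eventually (\<lambda>n. 1 \<le> j n \<and> j n \<le> n) sequentially"
    and t: "r < cdf G t"
  shows "AE \<omega> in iid G. eventually (\<lambda>n. ostat (sample \<omega> n) (j n) \<le> t) sequentially"
  using iid_frequency_tendsto[OF G atMost_borel[of t]]
proof eventually_elim
  case (elim \<omega>)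
  define m where "m = (r + cdf G t) / 2"
  have m: "r < m" "m < cdf G t" using t unfolding m_def by argo+
  have "eventually (\<lambda>n. m < real (card {i\<in>{..<n}. \<omega> i \<in> {..t}}) / real n) sequentially"
    using order_tendstoD(1)[OF elim] m(2) by (simp add: cdf_def)
  moreover have "eventually (\<lambda>n. real (j n) / real n < m) sequentially"
    using order_tendstoD(2)[OF j(1) m(1)] .
  ultimately show ?case using j(2) eventually_gt_at_top[of 0]
  proof eventually_elim
    case (elim n)
    then have "real (j n) / real n < real (card {i\<in>{..<n}. \<omega> i \<in> {..t}}) / real n" by linarith
    then have "real (j n) < real (card {i\<in>{..<n}. \<omega> i \<in> {..t}})"
      using elim(4) by (simp add: divide_less_cancel)
    with elim(3) show ?case using ostat_sample_le_iff[of "j n" n \<omega> t] by simp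
  qed
qed

lemma ostat_sample_eventually_gt:
  assumes G: "real_distribution G"
    and j: "(\<lambda>n. real (j n) / real n) \<longlonglongrightarrow> r" "eventually (\<lambda>n. 1 \<le> j n \<and> j n \<le> n) sequentially"
    and t: "cdf G t < r"
  shows "AE \<omega> in iid G. eventually (\<lambda>n. t < ostat (sample \<omega> n) (j n)) sequentially"
  using iid_frequency_tendsto[OF G atMost_borel[of t]]
proof eventually_elim
  case (elim \<omega>)
  define m where "m = (r + cdf G t) / 2"
  have m: "m < r" "cdf G t < m" using t unfolding m_def by argo+
  have "eventually (\<lambda>n. real (card {i\<in>{..<n}. \<omega> i \<in> {..t}}) / real n < m) sequentially"
    using order_tendstoD(2)[OF elim] m(2) by (simp add: cdf_def)
  moreover have "eventually (\<lambda>n. m < real (j n) / real n) sequentially"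
    using order_tendstoD(1)[OF j(1) m(1)] .
  ultimately show ?case using j(2) eventually_gt_at_top[of 0]
  proof eventually_elim
    case (elim n)
    then have "real (card {i\<in>{..<n}. \<omega> i \<in> {..t}}) / real n < real (j n) / real n" by linarith
    then have "real (card {i\<in>{..<n}. \<omega> i \<in> {..t}}) < real (j n)"
      using elim(4) by (simp add: divide_less_cancel)
    with elim(3) show ?case using ostat_sample_le_iff[of "j n" n \<omega> t] by simp
  qed
qed

lemma esssup_ge_if_positive:
  assumes "f \<in> borel_measurable M" "0 < emeasure M {x\<in>space M. c \<le> f x}"
  shows "c \<le> esssup M (f :: _ \<Rightarrow> ereal)"
proof (rule ccontr)
  assume "\<not> c \<le> esssup M f"
  have "AE x in M. f x \<le> esssup M f" by (rule esssup_AE)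
  then have "AE x in M. \<not> c \<le> f x"
    by eventually_elim (use \<open>\<not> c \<le> esssup M f\<close> in auto)
  then have "emeasure M {x\<in>space M. c \<le> f x} = 0"
    using assms(1) by (subst (asm) AE_iff_measurable[OF _ refl]) auto
  with assms(2) show False by simp
qed

lemma (in prob_space) esssup_ge_if_AE:
  assumes "f \<in> borel_measurable M" "AE x in M. c \<le> f x"
  shows "c \<le> esssup M (f :: _ \<Rightarrow> ereal)"
proof -
  have "esssup M (\<lambda>x. c) \<le> esssup M f" by (rule esssup_AE_mono) (use assms in auto)
  then show ?thesis by (simp add: esssup_const emeasure_space_1)
qed

lemma limsup_ge_if_frequently:
  assumes "frequently (\<lambda>n. c \<le> X n) sequentially"
  shows "c \<le> limsup (X :: nat \<Rightarrow> ereal)"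
  unfolding limsup_INF_SUP
proof (rule INF_greatest)
  fix n
  obtain m where "n \<le> m" "c \<le> X m" using assms unfolding frequently_sequentially by blast
  then show "c \<le> (SUP m\<in>{n..}. X m)" by (meson SUP_upper atLeast_iff order_trans)
qed

lemma (in prob_space) prob_limsup_ge:
  assumes [measurable]: "\<And>n. A n \<in> events" and freq: "frequently (\<lambda>n. c \<le> prob (A n)) sequentially"
  shows "c \<le> prob (limsup A)"
proof -
  define U where "U = (\<lambda>m. \<Union>n\<in>{m..}. A n)"
  have [measurable]: "U m \<in> events" for m unfolding U_def by measurable
  have "decseq U" unfolding U_def decseq_def by (auto intro: order_trans)
  then have "(\<lambda>m. prob (U m)) \<longlonglongrightarrow> prob (\<Inter>m. U m)"
    by (intro finite_Lim_measure_decseq) auto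
  moreover have "c \<le> prob (U m)" for m
  proof -
    obtain n where "m \<le> n" "c \<le> prob (A n)" using freq unfolding frequently_sequentially by blast
    moreover have "prob (A n) \<le> prob (U m)"
      using \<open>m \<le> n\<close> by (intro finite_measure_mono) (auto simp: U_def)
    ultimately show ?thesis by simp
  qed
  ultimately have "c \<le> prob (\<Inter>m. U m)" by (intro LIMSEQ_le_const) auto
  then show ?thesis by (simp add: limsup_INF_SUP U_def)
qed

section \<open>Contamination\<close>

definition mixture :: "real measure \<Rightarrow> real measure \<Rightarrow> real \<Rightarrow> real measure" where
  "mixture F H \<delta> = interval_measure (\<lambda>x. (1 - \<delta>) * cdf F x + \<delta> * cdf H x)"

context
  fixes F H :: "real measure" and \<delta> :: real
  assumes F: "real_distribution F" and H: "real_distribution H" and \<delta>: "0 \<le> \<delta>" "\<delta> \<le> 1"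
begin

interpretation F: real_distribution F by (rule F)
interpretation H: real_distribution H by (rule H)

lemma
  shows real_distribution_mixture: "real_distribution (mixture F H \<delta>)"
    and cdf_mixture: "cdf (mixture F H \<delta>) x = (1 - \<delta>) * cdf F x + \<delta> * cdf H x"
proof -
  let ?g = "\<lambda>x. (1 - \<delta>) * cdf F x + \<delta> * cdf H x"
  have mono: "?g x \<le> ?g y" if "x \<le> y" for x y
    using that \<delta> by (intro add_mono mult_left_mono F.cdf_nondecreasing H.cdf_nondecreasing) auto
  have right_cont: "continuous (at_right a) ?g" for a
    by (intro continuous_intros F.cdf_is_right_cont H.cdf_is_right_cont)
  have "(?g \<longlongrightarrow> (1 - \<delta>) * 0 + \<delta> * 0) at_bot"
    by (intro tendsto_intros F.cdf_lim_at_bot H.cdf_lim_at_bot)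
  then have bot: "(?g \<longlongrightarrow> 0) at_bot" by simp
  have "(?g \<longlongrightarrow> (1 - \<delta>) * 1 + \<delta> * 1) at_top"
    by (intro tendsto_intros F.cdf_lim_at_top_prob H.cdf_lim_at_top_prob)
  then have top: "(?g \<longlongrightarrow> 1) at_top" by simp
  show "real_distribution (mixture F H \<delta>)"
    unfolding mixture_def using mono right_cont bot top by (rule real_distribution_interval_measure)
  show "cdf (mixture F H \<delta>) x = ?g x"
    unfolding mixture_def using mono right_cont bot by (subst cdf_interval_measure) auto
qed

lemma mixture_in_contam: "mixture F H \<delta> \<in> contam F \<delta>"
  unfolding contam_def using real_distribution_mixture cdf_mixture H by auto

lemma measure_mixture_singleton:
  "measure (mixture F H \<delta>) {x} = (1 - \<delta>) * measure F {x} + \<delta> * measure H {x}"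
proof -
  interpret G: real_distribution "mixture F H \<delta>" by (rule real_distribution_mixture)
  have atom: "measure M {x} = cdf M x - measure M {..<x}" if "real_distribution M" for M
  proof -
    interpret M: real_distribution M by (rule that)
    have "measure M ({..<x} \<union> {x}) = measure M {..<x} + measure M {x}"
      by (rule M.finite_measure_Union) auto
    moreover have "{..<x} \<union> {x} = {..x}" by auto
    ultimately show ?thesis by (simp add: cdf_def)
  qed
  have lim: "measure (mixture F H \<delta>) {..<x} = (1 - \<delta>) * measure F {..<x} + \<delta> * measure H {..<x}"
    using G.cdf_at_left[of x] cdf_mixture[abs_def]
    by (intro tendsto_unique[OF _ _ tendsto_add[OF tendsto_mult_left tendsto_mult_left,
          OF F.cdf_at_left H.cdf_at_left]]) auto
  have "measure (mixture F H \<delta>) {x} = cdf (mixture F H \<delta>) x - measure (mixture F H \<delta>) {..<x}"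
    by (rule atom[OF real_distribution_mixture])
  also have "\<dots> = (1 - \<delta>) * (cdf F x - measure F {..<x}) + \<delta> * (cdf H x - measure H {..<x})"
    unfolding lim cdf_mixture by (simp add: algebra_simps)
  finally show ?thesis using atom[OF F] atom[OF H] by simp
qed

end

lemma real_distribution_return: "real_distribution (return borel (x :: real))"
  by (simp add: real_distribution_def prob_space_return real_distribution_axioms_def)

lemma coverage_limit:
  fixes A B :: "nat \<Rightarrow> real list \<Rightarrow> real"
  assumes cover: "\<forall>n\<ge>1. (INF G\<in>contam G0 \<epsilon>. measure (iid G)
      {\<omega>. A n (sample \<omega> n) \<le> m \<and> m < B n (sample \<omega> n)}) = 1 - \<alpha>"
    and "\<alpha> < 1" and F: "F \<in> contam G0 \<epsilon>"
    and A: "AE \<omega> in iid F. (\<lambda>n. A n (sample \<omega> n)) \<longlonglongrightarrow> A0"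
    and B: "AE \<omega> in iid F. (\<lambda>n. B n (sample \<omega> n)) \<longlonglongrightarrow> B0"
  shows "A0 \<le> m \<and> m \<le> B0"
proof -
  define S where "S n = {\<omega>. A n (sample \<omega> n) \<le> m \<and> m < B n (sample \<omega> n)}" for n
  have "real_distribution F" using F by (simp add: contam_def)
  then interpret P: prob_space "iid F" by (rule prob_space_iid)
  have S_large: "1 - \<alpha> \<le> P.prob (S n)" if "1 \<le> n" for n
  proof -
    have "(INF G\<in>contam G0 \<epsilon>. measure (iid G) (S n)) \<le> measure (iid F) (S n)"
      by (rule cINF_lower[OF _ F]) (auto intro!: bdd_belowI[of _ 0])
    with cover that show ?thesis by (simp add: S_def)
  qed
  text \<open>Non-measurable sets have measure 0, so the S n are events.\<close>
  have S: "S n \<in> P.events" if "1 \<le> n" for n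
    using S_large[OF that] \<open>\<alpha> < 1\<close> measure_notin_sets[of "S n" "iid F"] by fastforce
  have L: "limsup (\<lambda>n. S (Suc n)) \<in> P.events" using S by (intro measurable_limsup) auto
  have "1 - \<alpha> \<le> P.prob (limsup (\<lambda>n. S (Suc n)))"
    using S_large S by (intro P.prob_limsup_ge always_eventually eventually_frequently) auto
  then have "\<not> (AE \<omega> in iid F. \<omega> \<notin> limsup (\<lambda>n. S (Suc n)))"
    using \<open>\<alpha> < 1\<close> P.prob_eq_0[OF L] by auto
  then have "\<not> (AE \<omega> in iid F. eventually (\<lambda>n. \<omega> \<notin> S (Suc n)) sequentially)"
    by (simp add: mem_limsup_iff not_frequently)
  moreover have "AE \<omega> in iid F. eventually (\<lambda>n. \<omega> \<notin> S (Suc n)) sequentially"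
    if "m < A0 \<or> B0 < m"
    using A B
  proof eventually_elim
    case (elim \<omega>)
    have "eventually (\<lambda>n. m < A n (sample \<omega> n) \<or> B n (sample \<omega> n) < m) sequentially"
      using that
    proof
      assume "m < A0"
      from order_tendstoD(1)[OF elim(1) this] show ?thesis by (auto elim: eventually_mono)
    next
      assume "B0 < m"
      from order_tendstoD(2)[OF elim(2) this] show ?thesis by (auto elim: eventually_mono)
    qed
    then show ?case
      by (subst eventually_sequentially_Suc) (auto simp: S_def elim: eventually_mono)
  qed
  ultimately show ?thesis by force
qed

lemma interval_measure_continuous:
  fixes g :: "real \<Rightarrow> real"
  assumes "\<And>x y. x \<le> y \<Longrightarrow> g x \<le> g y" "\<And>x. isCont g x"
    and "(g \<longlongrightarrow> 0) at_bot" "(g \<longlongrightarrow> 1) at_top"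
  shows "real_distribution (interval_measure g)" "cdf (interval_measure g) = g"
proof -
  have right_cont: "continuous (at_right x) g" for x using assms(2) continuous_at_split by blast
  show "real_distribution (interval_measure g)"
    by (rule real_distribution_interval_measure[OF assms(1) right_cont assms(3,4)])
  show "cdf (interval_measure g) = g"
    by (rule cdf_interval_measure[OF assms(1) right_cont assms(3)])
qed

text \<open>The contaminating distribution takes mass \<beta> from the left tail of F and \<epsilon> - \<beta> from its
  right tail; what remains, rescaled, has cdf g and median the (\<beta> + (1 - \<epsilon>) / 2)-quantile of F.\<close>
lemma contam_clamped:
  fixes F :: "real measure" and \<epsilon> \<beta> :: real
  assumes F: "real_distribution F" "\<forall>x. isCont (cdf F) x"
    and \<epsilon>: "0 \<le> \<epsilon>" "\<epsilon> < 1" and \<beta>: "0 \<le> \<beta>" "\<beta> \<le> \<epsilon>"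
  defines "g \<equiv> \<lambda>x. min (max 0 (cdf F x - \<beta>)) (1 - \<epsilon>) / (1 - \<epsilon>)"
  shows "real_distribution (interval_measure g)" "cdf (interval_measure g) = g"
    and "F \<in> contam (interval_measure g) \<epsilon>"
proof -
  interpret F: real_distribution F by (rule F(1))
  have "(g \<longlongrightarrow> min (max 0 (0 - \<beta>)) (1 - \<epsilon>) / (1 - \<epsilon>)) at_bot"
    unfolding g_def by (intro tendsto_intros F.cdf_lim_at_bot) (use \<epsilon> in simp)
  moreover have "(g \<longlongrightarrow> min (max 0 (1 - \<beta>)) (1 - \<epsilon>) / (1 - \<epsilon>)) at_top"
    unfolding g_def by (intro tendsto_intros F.cdf_lim_at_top_prob) (use \<epsilon> in simp)
  ultimately have "(g \<longlongrightarrow> 0) at_bot" "(g \<longlongrightarrow> 1) at_top" using \<epsilon> \<beta> by simp_all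
  moreover have "g x \<le> g y" if "x \<le> y" for x y
    unfolding g_def using \<epsilon> F.cdf_nondecreasing[OF that]
    by (intro divide_right_mono min.mono max.mono) auto
  moreover have "isCont g x" for x
    unfolding g_def using \<epsilon> F(2) by (intro continuous_intros) auto
  ultimately show G: "real_distribution (interval_measure g)" "cdf (interval_measure g) = g"
    using interval_measure_continuous[of g] by blast+
  show "F \<in> contam (interval_measure g) \<epsilon>"
  proof (cases "\<epsilon> = 0")
    case True
    then have "g = cdf F" using \<beta> F.cdf_nonneg F.cdf_bounded_prob by (auto simp: g_def fun_eq_iff)
    with True G F(1) show ?thesis by (auto simp: contam_def)
  next
    case False
    define h where "h x = (min (cdf F x) \<beta> + max 0 (cdf F x - \<beta> - (1 - \<epsilon>))) / \<epsilon>" for x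
    have "(h \<longlongrightarrow> (min 0 \<beta> + max 0 (0 - \<beta> - (1 - \<epsilon>))) / \<epsilon>) at_bot"
      unfolding h_def by (intro tendsto_intros F.cdf_lim_at_bot) (use False in simp)
    moreover have "(h \<longlongrightarrow> (min 1 \<beta> + max 0 (1 - \<beta> - (1 - \<epsilon>))) / \<epsilon>) at_top"
      unfolding h_def by (intro tendsto_intros F.cdf_lim_at_top_prob) (use False in simp)
    ultimately have "(h \<longlongrightarrow> 0) at_bot" "(h \<longlongrightarrow> 1) at_top" using \<epsilon> \<beta> False by simp_all
    moreover have "h x \<le> h y" if "x \<le> y" for x y
      unfolding h_def using \<epsilon> F.cdf_nondecreasing[OF that]
      by (intro divide_right_mono add_mono min.mono max.mono) auto
    moreover have "isCont h x" for x
      unfolding h_def using False F(2) by (intro continuous_intros) auto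
    ultimately have H: "real_distribution (interval_measure h)" "cdf (interval_measure h) = h"
      using interval_measure_continuous[of h] by blast+
    have "cdf F x = (1 - \<epsilon>) * g x + \<epsilon> * h x" for x
      using \<epsilon> False by (auto simp: g_def h_def min_def max_def)
    with G H F(1) show ?thesis unfolding contam_def by auto
  qed
qed

section \<open>Asymptotic length of the interval\<close>

locale median_interval = symmetric_unimodal_density F f \<theta> for F f \<theta> +
  fixes \<alpha> \<epsilon> :: real and k :: "nat \<Rightarrow> nat"
  assumes \<alpha>_range: "0 < \<alpha>" "\<alpha> < 1"
    and \<epsilon>_range: "0 \<le> \<epsilon>" "\<epsilon> < 1/2"
    and k_argmin: "\<forall>n\<ge>1. \<forall>j. \<bar>alpha_star n (k n) \<epsilon> - \<alpha>\<bar> \<le> \<bar>alpha_star n j \<epsilon> - \<alpha>\<bar>"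
begin

abbreviation p :: real where "p \<equiv> (1 - \<epsilon>) / 2"

definition asym_length :: "(nat \<Rightarrow> real) \<Rightarrow> ereal" where
  "asym_length \<omega> = limsup (\<lambda>n. ereal (ostat (sample \<omega> n) (n - k n) - ostat (sample \<omega> n) (k n + 1)))"

lemma p_range: "1/4 < p" "p \<le> 1/2"
  using \<epsilon>_range by auto

lemma k_ratio: "(\<lambda>n. real (k n) / real n) \<longlonglongrightarrow> p"
  using alpha_star_argmin_ratio_tendsto \<alpha>_range \<epsilon>_range k_argmin by simp

lemma eventually_k_less: "eventually (\<lambda>n. k n < n) sequentially"
proof -
  have "eventually (\<lambda>n. real (k n) / real n < 1) sequentially"
    using order_tendstoD(2)[OF k_ratio] p_range by simp
  then show ?thesis using eventually_gt_at_top[of 0]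
    by eventually_elim (simp add: divide_less_eq)
qed

lemma upper_index:
  "(\<lambda>n. real (n - k n) / real n) \<longlonglongrightarrow> 1 - p"
  "eventually (\<lambda>n. 1 \<le> n - k n \<and> n - k n \<le> n) sequentially"
proof -
  have "(\<lambda>n. 1 - real (k n) / real n) \<longlonglongrightarrow> 1 - p" by (intro tendsto_intros k_ratio)
  moreover have "eventually (\<lambda>n. 1 - real (k n) / real n = real (n - k n) / real n) sequentially"
    using eventually_k_less eventually_gt_at_top[of 0]
    by eventually_elim (simp add: of_nat_diff field_simps)
  ultimately show "(\<lambda>n. real (n - k n) / real n) \<longlonglongrightarrow> 1 - p" by (rule Lim_transform_eventually)
  show "eventually (\<lambda>n. 1 \<le> n - k n \<and> n - k n \<le> n) sequentially"
    using eventually_k_less by eventually_elim auto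
qed

lemma lower_index:
  "(\<lambda>n. real (k n + 1) / real n) \<longlonglongrightarrow> p"
  "eventually (\<lambda>n. 1 \<le> k n + 1 \<and> k n + 1 \<le> n) sequentially"
proof -
  have "(\<lambda>n. real (k n) / real n + inverse (real n)) \<longlonglongrightarrow> p + 0"
    by (intro tendsto_intros k_ratio tendsto_inverse_0_at_top filterlim_real_sequentially)
  moreover have "eventually (\<lambda>n. real (k n) / real n + inverse (real n) = real (k n + 1) / real n) sequentially"
    using eventually_gt_at_top[of 0] by eventually_elim (simp add: field_simps)
  ultimately show "(\<lambda>n. real (k n + 1) / real n) \<longlonglongrightarrow> p"
    using Lim_transform_eventually by fastforce
  show "eventually (\<lambda>n. 1 \<le> k n + 1 \<and> k n + 1 \<le> n) sequentially"
    using eventually_k_less by eventually_elim auto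
qed

lemma asym_length_measurable: "real_distribution G \<Longrightarrow> asym_length \<in> borel_measurable (iid G)"
  unfolding asym_length_def[abs_def] limsup_INF_SUP by (rule measurable_iid) measurable

lemma AE_asym_length_le:
  assumes G: "real_distribution G" and t: "1 - p < cdf G t" and s: "cdf G s < p"
  shows "AE \<omega> in iid G. asym_length \<omega> \<le> ereal (t - s)"
  using ostat_sample_eventually_le[OF G upper_index t] ostat_sample_eventually_gt[OF G lower_index s]
proof eventually_elim
  case (elim \<omega>)
  then have "eventually (\<lambda>n. ereal (ostat (sample \<omega> n) (n - k n) - ostat (sample \<omega> n) (k n + 1))
      \<le> ereal (t - s)) sequentially"
    by eventually_elim simp
  then show ?case unfolding asym_length_def by (rule Limsup_bounded)
qed

lemma AE_asym_length_ge:
  assumes G: "real_distribution G" and t: "cdf G t < 1 - p" and s: "p < cdf G s"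
  shows "AE \<omega> in iid G. ereal (t - s) \<le> asym_length \<omega>"
  using ostat_sample_eventually_gt[OF G upper_index t] ostat_sample_eventually_le[OF G lower_index s]
proof eventually_elim
  case (elim \<omega>)
  then have "eventually (\<lambda>n. ereal (t - s)
      \<le> ereal (ostat (sample \<omega> n) (n - k n) - ostat (sample \<omega> n) (k n + 1))) sequentially"
    by eventually_elim simp
  then show ?case unfolding asym_length_def by (intro le_Limsup) simp_all
qed

abbreviation Lmax :: "real \<Rightarrow> real" where
  "Lmax \<delta> \<equiv> Q ((1 + \<epsilon>) / (2 * (1 - \<delta>))) - Q ((1 - \<epsilon>) / (2 * (1 - \<delta>)))"

text \<open>Between the points where the contaminated cdf crosses p and 1 - p, the cdf of F stays within
  [1 - b, b] and rises by at most b - a = \<epsilon> / (1 - \<delta>).\<close>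
lemma contaminated_band_length_le:
  assumes \<delta>: "0 \<le> \<delta>" "\<delta> < p" and H: "real_distribution H"
    and G: "\<forall>x. cdf G x = (1 - \<delta>) * cdf F x + \<delta> * cdf H x"
    and "l < u" and above: "\<forall>s>l. p \<le> cdf G s" and below: "\<forall>t<u. cdf G t \<le> 1 - p"
  shows "u - l \<le> Lmax \<delta>"
proof -
  interpret H: real_distribution H by (rule H)
  define a where "a = (1 - \<epsilon>) / (2 * (1 - \<delta>))"
  define b where "b = (1 + \<epsilon>) / (2 * (1 - \<delta>))"
  have d: "0 < 1 - \<delta>" using \<delta> p_range by simp
  then have scale: "(1 - \<delta>) * x \<le> (1 - \<delta>) * y \<longleftrightarrow> x \<le> y" for x y by simp
  have ab: "(1 - \<delta>) * a = p" "(1 - \<delta>) * b = 1 - p"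
    using d by (simp_all add: a_def b_def field_simps)
  have H_bounds: "0 \<le> \<delta> * cdf H x" "\<delta> * cdf H x \<le> \<delta>" for x
    using \<delta> H.cdf_nonneg[of x] H.cdf_bounded_prob[of x] by (simp_all add: mult_left_le)
  have "(1 - \<delta>) * a \<le> (1 - \<delta>) * b" "(1 - \<delta>) * 1 \<le> (1 - \<delta>) * (a + b)"
    unfolding ab distrib_left using \<delta> p_range by argo+
  moreover have "(1 - \<delta>) * b < (1 - \<delta>) * 1" unfolding ab using \<delta> by argo
  ultimately have "a \<le> b" "b < 1" "1 \<le> a + b" using d by (simp_all only: scale) simp
  moreover have "1 - b \<le> cdf F l"
  proof (rule ge_if_isCont_at_right[where g="cdf F"])
    have "(1 - \<delta>) * (1 - b) \<le> (1 - \<delta>) * cdf F y" if "l < y" for y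
      using above[rule_format, OF that] G[rule_format, of y] H_bounds[of y]
      unfolding right_diff_distrib mult_1_right ab by argo
    then have "1 - b \<le> cdf F y" if "l < y" for y using that by (simp only: scale)
    then show "\<forall>\<^sub>F y in at_right l. 1 - b \<le> cdf F y"
      by (intro eventually_at_rightI[of l "l + 1"]) auto
  qed (use F_cont in simp)
  moreover have "cdf F u \<le> b"
  proof (rule le_if_isCont_at_left[where g="cdf F"])
    have "(1 - \<delta>) * cdf F y \<le> (1 - \<delta>) * b" if "y < u" for y
      using below[rule_format, OF that] G[rule_format, of y] H_bounds[of y] unfolding ab by argo
    then have "cdf F y \<le> b" if "y < u" for y using that by (simp only: scale)
    then show "\<forall>\<^sub>F y in at_left u. cdf F y \<le> b"
      by (intro eventually_at_leftI[of "u - 1"]) auto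
  qed (use F_cont in simp)
  moreover have "cdf F u - cdf F l \<le> b - a"
  proof (rule increment_le_if_isCont[OF \<open>l < u\<close>])
    fix s t
    assume st: "l < s" "s \<le> t" "t < u"
    have "(1 - \<delta>) * (cdf F t - cdf F s) \<le> cdf G t - cdf G s"
      using G H.cdf_nondecreasing[OF \<open>s \<le> t\<close>] \<delta> by (simp add: algebra_simps mult_left_mono)
    also have "\<dots> \<le> (1 - \<delta>) * (b - a)"
      using above[rule_format, of s] below[rule_format, of t] st ab
      unfolding right_diff_distrib by argo
    finally show "cdf F t - cdf F s \<le> b - a" by (simp only: scale)
  qed (simp_all add: F_cont)
  ultimately show ?thesis unfolding a_def b_def by (rule length_le_Q_gap)
qed

lemma Lmax_nonneg:
  assumes "0 \<le> \<delta>" "\<delta> < p"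
  shows "0 \<le> Lmax \<delta>"
proof -
  have "0 < 2 * (1 - \<delta>)" using assms p_range by argo
  moreover have "1 + \<epsilon> < 2 * (1 - \<delta>)" using assms by argo
  ultimately have "0 < (1 - \<epsilon>) / (2 * (1 - \<delta>))" "(1 - \<epsilon>) / (2 * (1 - \<delta>)) \<le> (1 + \<epsilon>) / (2 * (1 - \<delta>))"
    "(1 + \<epsilon>) / (2 * (1 - \<delta>)) < 1"
    using \<epsilon>_range by (simp_all add: divide_right_mono)
  then show ?thesis using Q_mono by simp
qed

lemma contaminated_crossing_gap:
  assumes \<delta>: "0 \<le> \<delta>" "\<delta> < p" and "G \<in> contam F \<delta>" and "0 < e"
  obtains t s where "1 - p < cdf G t" "cdf G s < p" "t - s \<le> Lmax \<delta> + e"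
proof -
  obtain H where G: "real_distribution G" and H: "real_distribution H"
    and G_cdf: "\<forall>x. cdf G x = (1 - \<delta>) * cdf F x + \<delta> * cdf H x"
    using \<open>G \<in> contam F \<delta>\<close> by (auto simp: contam_def)
  interpret G: real_distribution G by (rule G)
  define Su where "Su = {t. 1 - p < cdf G t}"
  define Sl where "Sl = {s. cdf G s < p}"
  have separated: "s < t" if "s \<in> Sl" "t \<in> Su" for s t
  proof (rule ccontr)
    assume "\<not> s < t"
    then have "cdf G t \<le> cdf G s" by (intro G.cdf_nondecreasing) simp
    moreover have "p \<le> 1 - p" using p_range by argo
    ultimately show False using that unfolding Su_def Sl_def mem_Collect_eq by argo
  qed
  obtain t0 where "t0 \<in> Su"
    using order_tendstoD(1)[OF G.cdf_lim_at_top_prob, of "1 - p"] p_range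
    by (auto simp: Su_def eventually_at_top_linorder)
  obtain s0 where "s0 \<in> Sl"
    using order_tendstoD(2)[OF G.cdf_lim_at_bot, of p] p_range
    by (auto simp: Sl_def eventually_at_bot_linorder)
  have bdd: "bdd_below Su" "bdd_above Sl"
    using separated \<open>t0 \<in> Su\<close> \<open>s0 \<in> Sl\<close> by (auto intro!: bdd_belowI bdd_aboveI less_imp_le)
  define u where "u = Inf Su"
  define l where "l = Sup Sl"
  have "u - l \<le> Lmax \<delta>"
  proof (cases "l < u")
    case True
    have "p \<le> cdf G s" if "l < s" for s
      using cSup_upper[OF _ bdd(2), of s] that by (force simp: Sl_def l_def)
    moreover have "cdf G t \<le> 1 - p" if "t < u" for t
      using cInf_lower[OF _ bdd(1), of t] that by (force simp: Su_def u_def)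
    ultimately show ?thesis
      using contaminated_band_length_le[OF \<delta> H G_cdf True] by blast
  qed (use Lmax_nonneg[OF \<delta>] in simp)
  moreover obtain t where "t \<in> Su" "t < u + e / 2"
    using cInf_less_iff[OF _ bdd(1), of "u + e / 2"] \<open>t0 \<in> Su\<close> \<open>0 < e\<close> by (auto simp: u_def)
  moreover obtain s where "s \<in> Sl" "l - e / 2 < s"
    using less_cSup_iff[OF _ bdd(2), of "l - e / 2"] \<open>s0 \<in> Sl\<close> \<open>0 < e\<close> by (auto simp: l_def)
  ultimately show ?thesis using that[of t s] by (simp add: Su_def Sl_def)
qed

lemma AE_asym_length_le_Lmax:
  assumes \<delta>: "0 \<le> \<delta>" "\<delta> < p" and G: "G \<in> contam F \<delta>"
  shows "AE \<omega> in iid G. asym_length \<omega> \<le> ereal (Lmax \<delta>)"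
proof -
  have G_distr: "real_distribution G" using G by (simp add: contam_def)
  have "AE \<omega> in iid G. asym_length \<omega> \<le> ereal (Lmax \<delta> + inverse (real (Suc m)))" for m
  proof -
    obtain t s where ts: "1 - p < cdf G t" "cdf G s < p" and gap: "t - s \<le> Lmax \<delta> + inverse (real (Suc m))"
      using contaminated_crossing_gap[OF \<delta> G, of "inverse (real (Suc m))"] by auto
    from AE_asym_length_le[OF G_distr ts] show ?thesis
      by eventually_elim (use gap in \<open>auto intro: order_trans\<close>)
  qed
  then have "AE \<omega> in iid G. \<forall>m. asym_length \<omega> \<le> ereal (Lmax \<delta> + inverse (real (Suc m)))"
    by (simp add: AE_all_countable)
  then show ?thesis
  proof eventually_elim
    case (elim \<omega>)
    have "(\<lambda>m. ereal (Lmax \<delta> + inverse (real (Suc m)))) \<longlonglongrightarrow> ereal (Lmax \<delta>)"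
      using tendsto_ereal[OF tendsto_add[OF tendsto_const LIMSEQ_inverse_real_of_nat, of "Lmax \<delta>"]]
      by simp
    then show ?case by (rule LIMSEQ_le_const) (use elim in auto)
  qed
qed

abbreviation contaminated_at :: "real \<Rightarrow> real \<Rightarrow> real measure" where
  "contaminated_at \<delta> M \<equiv> mixture F (return borel M) \<delta>"

context
  fixes \<delta> :: real
  assumes \<delta>: "0 \<le> \<delta>" "\<delta> \<le> 1"
begin

lemma real_distribution_contaminated_at: "real_distribution (contaminated_at \<delta> M)"
  using real_distribution_mixture[OF F_distr real_distribution_return \<delta>] .

lemma contaminated_at_in_contam: "contaminated_at \<delta> M \<in> contam F \<delta>"
  using mixture_in_contam[OF F_distr real_distribution_return \<delta>] .

lemma cdf_contaminated_at:
  "cdf (contaminated_at \<delta> M) x = (1 - \<delta>) * cdf F x + (if M \<le> x then \<delta> else 0)"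
  using cdf_mixture[OF F_distr real_distribution_return \<delta>] by (simp add: cdf_def measure_return)

lemma measure_contaminated_at_atom: "measure (contaminated_at \<delta> M) {M} = \<delta>"
  using measure_mixture_singleton[OF F_distr real_distribution_return \<delta>] F_cont F.isCont_cdf
  by (simp add: measure_return)

end

text \<open>A contaminating atom to the right of Q b makes the contaminated cdf cross p at Q a and
  1 - p at Q b.\<close>
lemma esssup_asym_length_ge_Lmax:
  assumes \<delta>: "0 \<le> \<delta>" "\<delta> < p"
  defines "c1 \<equiv> (1 + \<epsilon>) / (2 * (1 - \<delta>))" and "c1w \<equiv> (1 - \<epsilon>) / (2 * (1 - \<delta>))"
  shows "ereal (Lmax \<delta>) \<le> esssup (iid (contaminated_at \<delta> (Q c1 + 1))) asym_length"
proof -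
  let ?G = "contaminated_at \<delta> (Q c1 + 1)"
  have d: "0 < 1 - \<delta>" and \<delta>1: "0 \<le> \<delta>" "\<delta> \<le> 1" using \<delta> p_range by auto
  have c1: "(1 - \<delta>) * c1 = 1 - p" "0 < c1" "c1 < 1" and c1w: "(1 - \<delta>) * c1w = p" "0 < c1w" "c1w < 1"
    using d \<delta> \<epsilon>_range by (auto simp: c1_def c1w_def field_simps)
  have G: "real_distribution ?G" by (rule real_distribution_contaminated_at[OF \<delta>1])
  interpret P: prob_space "iid ?G" by (rule prob_space_iid[OF G])
  have approx: "ereal (Lmax \<delta> - 2 * e) \<le> esssup (iid ?G) asym_length" if "0 < e" "e < 1" for e
  proof -
    have "cdf ?G (Q c1 - e) = (1 - \<delta>) * cdf F (Q c1 - e)"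
      using that by (simp add: cdf_contaminated_at[OF \<delta>1])
    also have "\<dots> < (1 - \<delta>) * c1"
      using F.cdf_less_if_less_quantile[of c1 "Q c1 - e"] c1(2) d that by simp
    also have "\<dots> = 1 - p" by (rule c1(1))
    finally have upper: "cdf ?G (Q c1 - e) < 1 - p" .
    have "p = (1 - \<delta>) * c1w" by (rule c1w(1)[symmetric])
    also have "\<dots> < (1 - \<delta>) * cdf F (Q c1w + e)"
      using Q_less_imp[of c1w "Q c1w + e"] c1w(2,3) d that by simp
    also have "\<dots> \<le> cdf ?G (Q c1w + e)" using \<delta> by (simp add: cdf_contaminated_at[OF \<delta>1])
    finally have lower: "p < cdf ?G (Q c1w + e)" .
    have "ereal (Q c1 - e - (Q c1w + e)) \<le> esssup (iid ?G) asym_length"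
      using AE_asym_length_ge[OF G upper lower] asym_length_measurable[OF G]
      by (intro P.esssup_ge_if_AE) auto
    then show ?thesis by (simp add: c1_def c1w_def algebra_simps)
  qed
  show ?thesis
  proof (rule ereal_le_epsilon2)
    fix r :: real
    assume "0 < r"
    define e where "e = min (r / 2) (1 / 2)"
    have e: "0 < e" "e < 1" "2 * e \<le> r" using \<open>0 < r\<close> by (auto simp: e_def)
    have "ereal (Lmax \<delta>) = ereal (Lmax \<delta> - 2 * e) + ereal (2 * e)" by simp
    also have "\<dots> \<le> esssup (iid ?G) asym_length + ereal r"
      using approx[OF e(1,2)] e(3) by (intro add_mono) auto
    finally show "ereal (Lmax \<delta>) \<le> esssup (iid ?G) asym_length + ereal r" .
  qed
qed

lemma sup_esssup_asym_length:
  assumes \<delta>: "0 \<le> \<delta>" "\<delta> < p"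
  shows "(SUP G\<in>contam F \<delta>. esssup (iid G) asym_length) = ereal (Lmax \<delta>)"
proof (rule antisym)
  show "(SUP G\<in>contam F \<delta>. esssup (iid G) asym_length) \<le> ereal (Lmax \<delta>)"
  proof (rule SUP_least)
    fix G
    assume G: "G \<in> contam F \<delta>"
    then have "real_distribution G" by (simp add: contam_def)
    then show "esssup (iid G) asym_length \<le> ereal (Lmax \<delta>)"
      using AE_asym_length_le_Lmax[OF \<delta> G] asym_length_measurable by (intro esssup_I) auto
  qed
  have "0 \<le> \<delta>" "\<delta> \<le> 1" using \<delta> p_range by auto
  then show "ereal (Lmax \<delta>) \<le> (SUP G\<in>contam F \<delta>. esssup (iid G) asym_length)"
    using esssup_asym_length_ge_Lmax[OF \<delta>] contaminated_at_in_contam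
    by (blast intro: SUP_upper2)
qed

text \<open>When \<delta> \<ge> p, more than k n of the first n observations hit a contaminating atom with
  probability bounded away from 0: for \<delta> = p this probability is at least 1 - alpha_star n (k n) \<epsilon>,
  which tends to 1 - \<alpha>.\<close>
lemma binomial_exceeds_k_eventually:
  assumes "p \<le> \<delta>" "\<delta> \<le> 1"
  shows "eventually (\<lambda>n. (1 - \<alpha>) / 2 \<le> measure_pmf.prob (binomial_pmf n \<delta>) {z. k n < z}) sequentially"
proof (cases "\<delta> = p")
  case True
  have "eventually (\<lambda>n. alpha_star n (k n) \<epsilon> < (1 + \<alpha>) / 2) sequentially"
    using \<alpha>_range \<epsilon>_range k_argmin
    by (intro order_tendstoD(2)[OF alpha_star_argmin_tendsto]) auto
  then show ?thesis unfolding True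
  proof eventually_elim
    case (elim n)
    have "measure_pmf.prob (binomial_pmf n p) {z. k n < z \<and> z < n - k n}
        \<le> measure_pmf.prob (binomial_pmf n p) {z. k n < z}"
      by (intro measure_pmf.finite_measure_mono) auto
    with elim show ?case unfolding alpha_star_def by argo
  qed
next
  case False
  define c where "c = (\<delta> - p) / 2"
  have c: "0 < c" "p + c = \<delta> - c" using assms False unfolding c_def by argo+
  let ?T = "\<lambda>n. measure_pmf.prob (binomial_pmf n \<delta>) {x. c \<le> \<bar>real x / real n - \<delta>\<bar>}"
  have "eventually (\<lambda>n. ?T n < (1 + \<alpha>) / 2) sequentially"
    using assms p_range c \<alpha>_range by (intro order_tendstoD(2)[OF binomial_tail_tendsto_0]) auto
  moreover have "eventually (\<lambda>n. real (k n) / real n < p + c) sequentially"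
    using c(1) by (intro order_tendstoD(2)[OF k_ratio]) simp
  ultimately show ?thesis using eventually_gt_at_top[of 0]
  proof eventually_elim
    case (elim n)
    have "{z. \<not> k n < z} \<subseteq> {x. c \<le> \<bar>real x / real n - \<delta>\<bar>}"
    proof safe
      fix z
      assume "\<not> k n < z"
      then have "real z / real n \<le> real (k n) / real n" by (simp add: divide_right_mono)
      with elim c show "c \<le> \<bar>real z / real n - \<delta>\<bar>" by linarith
    qed
    then have "measure_pmf.prob (binomial_pmf n \<delta>) {z. \<not> k n < z} \<le> ?T n"
      by (intro measure_pmf.finite_measure_mono) auto
    moreover have "measure_pmf.prob (binomial_pmf n \<delta>) {z. k n < z}
        = 1 - measure_pmf.prob (binomial_pmf n \<delta>) {z. \<not> k n < z}"
      by (subst measure_pmf.prob_compl[symmetric]) (auto intro: arg_cong[where f="measure_pmf.prob _"])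
    ultimately show ?case using elim \<alpha>_range by argo
  qed
qed

lemma asym_length_ge_if_frequently:
  assumes "eventually (\<lambda>n. ostat (sample \<omega> n) (k n + 1) \<le> s) sequentially"
    and "frequently (\<lambda>n. k n < card {i\<in>{..<n}. t < \<omega> i}) sequentially"
  shows "ereal (t - s) \<le> asym_length \<omega>"
proof -
  have "frequently (\<lambda>n. k n < card {i\<in>{..<n}. t < \<omega> i} \<and> ostat (sample \<omega> n) (k n + 1) \<le> s
      \<and> 1 \<le> n - k n \<and> n - k n \<le> n) sequentially"
    by (rule frequently_eventually_frequently[OF assms(2) eventually_conj[OF assms(1) upper_index(2)]])
  then have "frequently (\<lambda>n. ereal (t - s)
      \<le> ereal (ostat (sample \<omega> n) (n - k n) - ostat (sample \<omega> n) (k n + 1))) sequentially"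
  proof (rule frequently_elim1)
    fix n
    assume n: "k n < card {i\<in>{..<n}. t < \<omega> i} \<and> ostat (sample \<omega> n) (k n + 1) \<le> s
      \<and> 1 \<le> n - k n \<and> n - k n \<le> n"
    then have "t < ostat (sample \<omega> n) (n - k n)" by (intro ostat_sample_gt_if_card_gt) auto
    with n show "ereal (t - s) \<le> ereal (ostat (sample \<omega> n) (n - k n) - ostat (sample \<omega> n) (k n + 1))"
      by simp
  qed
  then show ?thesis unfolding asym_length_def by (rule limsup_ge_if_frequently)
qed

text \<open>A contaminating atom at M leaves the lower order statistic bounded, while infinitely often it
  holds more than k n of the observations and thus drags the upper one to M.\<close>
lemma esssup_asym_length_unbounded:
  assumes \<delta>: "p \<le> \<delta>" "\<delta> < 1/2"
  obtains s0 where "\<And>M. ereal (M - 1 - s0) \<le> esssup (iid (contaminated_at \<delta> M)) asym_length"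
proof -
  have d: "0 < 1 - \<delta>" and \<delta>1: "0 \<le> \<delta>" "\<delta> \<le> 1" using \<delta> p_range by auto
  define r where "r = p / (1 - \<delta>)"
  have "0 < p" "p < 1 - \<delta>" using \<delta> p_range by argo+
  have cancel: "(1 - \<delta>) * (x / (1 - \<delta>)) = x" for x using d by simp
  have r: "0 < r" "r < 1" "(1 - \<delta>) * r = p"
    unfolding r_def using \<open>0 < p\<close> \<open>p < 1 - \<delta>\<close> d by (simp_all only: cancel divide_less_eq_1_pos divide_pos_pos)
  define s0 where "s0 = Q r + 1"
  have "ereal (M - 1 - s0) \<le> esssup (iid (contaminated_at \<delta> M)) asym_length" for M
  proof -
    let ?G = "contaminated_at \<delta> M"
    have G: "real_distribution ?G" by (rule real_distribution_contaminated_at[OF \<delta>1])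
    interpret P: prob_space "iid ?G" by (rule prob_space_iid[OF G])
    have "p = (1 - \<delta>) * r" using r(3) by simp
    also have "\<dots> < (1 - \<delta>) * cdf F s0"
      using Q_less_imp[OF r(1,2), of s0] d by (simp add: s0_def)
    also have "\<dots> \<le> cdf ?G s0" using \<delta>1 by (simp add: cdf_contaminated_at)
    finally have lower: "AE \<omega> in iid ?G. eventually (\<lambda>n. ostat (sample \<omega> n) (k n + 1) \<le> s0) sequentially"
      by (rule ostat_sample_eventually_le[OF G lower_index])
    define E where "E n = {\<omega> \<in> space (iid ?G). k n < card {i\<in>{..<n}. \<omega> i \<in> {M}}}" for n
    have E: "E n \<in> P.events" for n
      unfolding E_def space_iid[OF G] sets_iid[OF G]
      using count_set_measurable[of "{M}" borel n UNIV "\<lambda>c. k n < c"] by (simp add: space_PiM)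
    have "P.prob (E n) = measure_pmf.prob (binomial_pmf n \<delta>) {z. k n < z}" for n
    proof -
      have "E n = {\<omega>. k n < card {i\<in>{..<n}. \<omega> i \<in> {M}}}" by (simp add: E_def space_iid[OF G])
      then show ?thesis
        using measure_iid_count[OF G, of "{M}" "\<lambda>z. k n < z" n]
          measure_contaminated_at_atom[OF \<delta>1, of M]
        by simp
    qed
    then have "eventually (\<lambda>n. (1 - \<alpha>) / 2 \<le> P.prob (E n)) sequentially"
      using binomial_exceeds_k_eventually[OF \<delta>(1) \<delta>1(2)] by simp
    then have "(1 - \<alpha>) / 2 \<le> P.prob (limsup E)"
      by (intro P.prob_limsup_ge E eventually_frequently) simp_all
    moreover have "AE \<omega> in iid ?G. \<omega> \<in> limsup E \<longrightarrow> ereal (M - 1 - s0) \<le> asym_length \<omega>"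
      using lower
    proof eventually_elim
      case (elim \<omega>)
      have "card {i\<in>{..<n}. \<omega> i \<in> {M}} \<le> card {i\<in>{..<n}. M - 1 < \<omega> i}" for n
        by (intro card_mono) auto
      then have "\<omega> \<in> limsup E \<Longrightarrow> frequently (\<lambda>n. k n < card {i\<in>{..<n}. M - 1 < \<omega> i}) sequentially"
        by (auto simp: mem_limsup_iff E_def elim!: frequently_elim1 intro: less_le_trans)
      with elim show ?case by (auto intro: asym_length_ge_if_frequently)
    qed
    then have "P.prob (limsup E) \<le> P.prob {\<omega> \<in> space (iid ?G). ereal (M - 1 - s0) \<le> asym_length \<omega>}"
      using asym_length_measurable[OF G] by (intro P.finite_measure_mono_AE) auto
    ultimately have "0 < emeasure (iid ?G) {\<omega> \<in> space (iid ?G). ereal (M - 1 - s0) \<le> asym_length \<omega>}"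
      using \<alpha>_range by (simp add: P.emeasure_eq_measure)
    then show ?thesis by (rule esssup_ge_if_positive[OF asym_length_measurable[OF G]])
  qed
  then show ?thesis by (rule that)
qed

lemma sup_esssup_asym_length_infinite:
  assumes \<delta>: "p \<le> \<delta>" "\<delta> < 1/2"
  shows "(SUP G\<in>contam F \<delta>. esssup (iid G) asym_length) = \<infinity>"
proof (rule ereal_top)
  fix B :: real
  obtain s0 where s0: "\<And>M. ereal (M - 1 - s0) \<le> esssup (iid (contaminated_at \<delta> M)) asym_length"
    using esssup_asym_length_unbounded[OF \<delta>] by blast
  have "0 \<le> \<delta>" "\<delta> \<le> 1" using \<delta> p_range by auto
  then have "ereal (B + 1 + s0 - 1 - s0) \<le> (SUP G\<in>contam F \<delta>. esssup (iid G) asym_length)"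
    using s0 contaminated_at_in_contam by (blast intro: SUP_upper2)
  then show "ereal B \<le> (SUP G\<in>contam F \<delta>. esssup (iid G) asym_length)" by simp
qed

lemma clamped_median:
  assumes \<beta>: "0 \<le> \<beta>" "\<beta> \<le> \<epsilon>"
  defines "g \<equiv> \<lambda>x. min (max 0 (cdf F x - \<beta>)) (1 - \<epsilon>) / (1 - \<epsilon>)"
  shows "A1 (interval_measure g)" "quantile (cdf (interval_measure g)) (1/2) = Q (\<beta> + p)"
    and "F \<in> contam (interval_measure g) \<epsilon>"
proof -
  have \<epsilon>: "0 \<le> \<epsilon>" "\<epsilon> < 1" using \<epsilon>_range by auto
  note G = contam_clamped[OF F_distr F_cont \<epsilon> \<beta>, folded g_def]
  show "F \<in> contam (interval_measure g) \<epsilon>" by (rule G(3))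
  have half_le: "1/2 \<le> g x \<longleftrightarrow> \<beta> + p \<le> cdf F x" for x
    using \<epsilon> \<beta> by (auto simp: g_def le_divide_eq min_def max_def; argo)
  have half_eq: "g x = 1/2 \<longleftrightarrow> cdf F x = \<beta> + p" for x
    using \<epsilon> \<beta> by (auto simp: g_def divide_eq_eq min_def max_def; argo)
  have level: "0 < \<beta> + p" "\<beta> + p < 1" using \<beta> \<epsilon> by argo+
  have "\<exists>!m. g m = 1/2"
  proof (rule ex1I)
    show "g (Q (\<beta> + p)) = 1/2" using half_eq cdf_Q[OF level] by blast
    show "m = Q (\<beta> + p)" if "g m = 1/2" for m using that half_eq Q_unique[OF level] by metis
  qed
  moreover have "isCont g x" for x
    unfolding g_def using \<epsilon> F_cont by (intro continuous_intros) auto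
  ultimately show "A1 (interval_measure g)" using G(1,2) by (simp add: A1_def)
  show "quantile (cdf (interval_measure g)) (1/2) = Q (\<beta> + p)"
    unfolding G(2) quantile_def half_le ..
qed

lemma median_limits:
  fixes A B :: "nat \<Rightarrow> real list \<Rightarrow> real"
  assumes cover: "\<forall>n\<ge>1. \<forall>G0. A1 G0 \<longrightarrow>
      (INF G\<in>contam G0 \<epsilon>. measure (iid G)
          {\<omega>. A n (sample \<omega> n) \<le> quantile (cdf G0) (1/2)
               \<and> quantile (cdf G0) (1/2) < B n (sample \<omega> n)}) = 1 - \<alpha>"
    and A: "AE \<omega> in iid F. (\<lambda>n. A n (sample \<omega> n)) \<longlonglongrightarrow> A0"
    and B: "AE \<omega> in iid F. (\<lambda>n. B n (sample \<omega> n)) \<longlonglongrightarrow> B0"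
  shows "Q ((1 + \<epsilon>) / 2) \<le> B0 \<and> A0 \<le> Q ((1 - \<epsilon>) / 2)"
proof -
  have bounds: "A0 \<le> Q (\<beta> + p) \<and> Q (\<beta> + p) \<le> B0" if "0 \<le> \<beta>" "\<beta> \<le> \<epsilon>" for \<beta>
  proof -
    let ?G0 = "interval_measure (\<lambda>x. min (max 0 (cdf F x - \<beta>)) (1 - \<epsilon>) / (1 - \<epsilon>))"
    have "\<forall>n\<ge>1. (INF G\<in>contam ?G0 \<epsilon>. measure (iid G)
        {\<omega>. A n (sample \<omega> n) \<le> Q (\<beta> + p) \<and> Q (\<beta> + p) < B n (sample \<omega> n)}) = 1 - \<alpha>"
      using cover[rule_format, OF _ clamped_median(1)[OF that]]
      unfolding clamped_median(2)[OF that] by simp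
    then show ?thesis
      by (rule coverage_limit[OF _ \<alpha>_range(2) clamped_median(3)[OF that] A B])
  qed
  have "\<epsilon> + p = (1 + \<epsilon>) / 2" by argo
  then show ?thesis using bounds[of \<epsilon>] bounds[of 0] \<epsilon>_range by (simp only:) simp
qed

end

theorem theorem2:
  fixes F :: "real measure" and f :: "real \<Rightarrow> real" and \<theta> \<alpha> \<epsilon> :: real
    and k :: "nat \<Rightarrow> nat"
    and A B :: "nat \<Rightarrow> real list \<Rightarrow> real" and A0 B0 :: real
  assumes F_distr: "real_distribution F"
    and F_cont: "\<forall>x. isCont (cdf F) x"
    and f_nonneg: "\<forall>x. 0 \<le> f x"
    and f_meas: "f \<in> borel_measurable borel"
    and F_density: "F = density lborel (\<lambda>x. ennreal (f x))"
    and f_symm: "\<forall>t. f (\<theta> + t) = f (\<theta> - t)"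
    and f_unimodal: "mono_on {..\<theta>} f \<and> antimono_on {\<theta>..} f"
    and \<alpha>_range: "0 < \<alpha>" "\<alpha> < 1"
    and \<epsilon>_range: "0 \<le> \<epsilon>" "\<epsilon> < 1/2"
    and k_argmin: "\<forall>n\<ge>1. \<forall>j. \<bar>alpha_star n (k n) \<epsilon> - \<alpha>\<bar> \<le> \<bar>alpha_star n j \<epsilon> - \<alpha>\<bar>"
  defines "a \<equiv> (\<lambda>n xs. ostat xs (k n + 1))"
    and "b \<equiv> (\<lambda>n xs. ostat xs (n - k n))"
  shows
    "(\<forall>\<delta>. 0 \<le> \<delta> \<and> \<delta> < (1 - \<epsilon>)/2 \<longrightarrow>
        max_asym_length a b F \<delta> =
          ereal (quantile (cdf F) ((1 + \<epsilon>) / (2 * (1 - \<delta>)))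
               - quantile (cdf F) ((1 - \<epsilon>) / (2 * (1 - \<delta>)))))
   \<and> length_breakdown a b F = (1 - \<epsilon>)/2
   \<and> (robust_length a b F \<epsilon> \<longleftrightarrow> \<epsilon> < 1/3)
   \<and> ((\<forall>n\<ge>1. \<forall>G0. A1 G0 \<longrightarrow>
          (INF G\<in>contam G0 \<epsilon>. measure (iid G)
              {\<omega>. A n (sample \<omega> n) \<le> quantile (cdf G0) (1/2)
                   \<and> quantile (cdf G0) (1/2) < B n (sample \<omega> n)}) = 1 - \<alpha>)
       \<and> (AE \<omega> in iid F. (\<lambda>n. A n (sample \<omega> n)) \<longlonglongrightarrow> A0)
       \<and> (AE \<omega> in iid F. (\<lambda>n. B n (sample \<omega> n)) \<longlonglongrightarrow> B0)
       \<longrightarrow> B0 \<ge> quantile (cdf F) ((1 + \<epsilon>)/2) \<and> A0 \<le> quantile (cdf F) ((1 - \<epsilon>)/2))"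
proof -
  interpret median_interval F f \<theta> \<alpha> \<epsilon> k
    by (intro median_interval.intro symmetric_unimodal_density.intro median_interval_axioms.intro)
      (fact assms)+
  have "max_asym_length a b F \<delta> = (SUP G\<in>contam F \<delta>. esssup (iid G) asym_length)" for \<delta>
    unfolding max_asym_length_def a_def b_def asym_length_def ..
  note max_length = this
  have length: "max_asym_length a b F \<delta> = ereal (Lmax \<delta>)" if "0 \<le> \<delta>" "\<delta> < p" for \<delta>
    using sup_esssup_asym_length[OF that] by (simp add: max_length)
  have not_robust: "\<not> robust_length a b F \<delta>" if "p \<le> \<delta>" "\<delta> < 1/2" for \<delta>
    using sup_esssup_asym_length_infinite[OF that] by (simp add: max_length robust_length_def)
  have robust: "robust_length a b F \<delta>" if "0 \<le> \<delta>" "\<delta> < p" for \<delta>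
    using length[OF that] by (simp add: robust_length_def)
  have "{\<delta>. 0 \<le> \<delta> \<and> \<delta> < 1/2 \<and> robust_length a b F \<delta>} = {0..<p}"
    using robust not_robust p_range by (force simp: not_less)
  then have "length_breakdown a b F = p"
    using p_range by (simp add: length_breakdown_def cSup_atLeastLessThan)
  moreover have "robust_length a b F \<epsilon> \<longleftrightarrow> \<epsilon> < 1/3"
    using robust[of \<epsilon>] not_robust[of \<epsilon>] \<epsilon>_range by argo
  ultimately show ?thesis
    using length median_limits by blast
qed

end
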